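(* Let $q\in(0,1)$, $c_{-1},c_{+1}\in\mathbb{R}$ and $\delta>0$. Let $S=\{-1,+1\}$ and let $(X_n,\eta_n)_{n\in\mathbb{Z}_+}$, where $\eta_n=X_n-X_{n-1}$, be a time-homogeneous irreducible Markov chain on $\mathbb{Z}_+\times S$ with transition probabilities \[\Pr[(X_{n+1},\eta_{n+1})=(x+j,j)\mid (X_n,\eta_n)=(x,i)]=q_{ij}(x),\quad i,j\in S,\] where, as $x\to\infty$, \[ q_{ij}(x)=\begin{cases} q+\frac{i c_i}{2x}+O(x^{-1-\delta}) & \text{if } j=i,\\ 1-q-\frac{i c_i}{2x}+O(x^{-1-\delta}) & \text{if } j\neq i.\end{cases}\] Let $c=(c_{+1}+c_{-1})/2$. If $c<-q$ then the walk is positive-recurrent; if $c>q$ then the walk is transient; if $|c|\le q$ then the walk is null-recurrent.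
   Context: This is a correlated random walk on $\mathbb{Z}_+$: the particle moves by $\pm1$ at each step, and the law of the next step depends on the current position $x$ and the previous direction of travel $i\in\{-1,+1\}$. *)

theory Defs
  imports "HOL-Analysis.Analysis" "HOL-Library.Landau_Symbols"
begin

text \<open>States are pairs (x, i) with x a nonnegative integer (position) and
 i in {-1,+1} (last direction of travel).\<close>

type_synonym cstate = "nat \<times> int"

definition dirs :: "int set" where "dirs = {-1, 1}"

definition crw_kernel :: "(int \<Rightarrow> int \<Rightarrow> nat \<Rightarrow> real) \<Rightarrow> cstate \<Rightarrow> cstate \<Rightarrow> real" where
  "crw_kernel qq s t =
     (if snd s \<in> dirs \<and> snd t \<in> dirs \<and> int (fst t) = int (fst s) + snd t
      then qq (snd s) (snd t) (fst s) else 0)"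

text \<open>State space of the chain: (0,+1) can never be entered (one arrives at 0
 only by a -1 step), so the chain lives on Z+ x S without (0,+1).\<close>
definition crw_states :: "cstate set" where
  "crw_states = {(x, i). i \<in> dirs \<and> (x > 0 \<or> i = -1)}"

fun nstep :: "(cstate \<Rightarrow> cstate \<Rightarrow> real) \<Rightarrow> nat \<Rightarrow> cstate \<Rightarrow> cstate \<Rightarrow> real" where
  "nstep P 0 s t = (if s = t then 1 else 0)"
| "nstep P (Suc n) s t = infsum (\<lambda>u. P s u * nstep P n u t) UNIV"

fun first_pass :: "(cstate \<Rightarrow> cstate \<Rightarrow> real) \<Rightarrow> nat \<Rightarrow> cstate \<Rightarrow> cstate \<Rightarrow> real" where
  "first_pass P 0 s t = 0"
| "first_pass P (Suc 0) s t = P s t"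
| "first_pass P (Suc (Suc n)) s t =
     infsum (\<lambda>u. if u = t then 0 else P s u * first_pass P (Suc n) u t) UNIV"

definition return_prob :: "(cstate \<Rightarrow> cstate \<Rightarrow> real) \<Rightarrow> cstate \<Rightarrow> real" where
  "return_prob P s = (\<Sum>n. first_pass P n s s)"

definition recurrent_state :: "(cstate \<Rightarrow> cstate \<Rightarrow> real) \<Rightarrow> cstate \<Rightarrow> bool" where
  "recurrent_state P s \<longleftrightarrow> return_prob P s = 1"

definition transient_state :: "(cstate \<Rightarrow> cstate \<Rightarrow> real) \<Rightarrow> cstate \<Rightarrow> bool" where
  "transient_state P s \<longleftrightarrow> \<not> recurrent_state P s"

definition pos_recurrent_state :: "(cstate \<Rightarrow> cstate \<Rightarrow> real) \<Rightarrow> cstate \<Rightarrow> bool" where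
  "pos_recurrent_state P s \<longleftrightarrow> recurrent_state P s \<and> summable (\<lambda>n. real n * first_pass P n s s)"

definition null_recurrent_state :: "(cstate \<Rightarrow> cstate \<Rightarrow> real) \<Rightarrow> cstate \<Rightarrow> bool" where
  "null_recurrent_state P s \<longleftrightarrow> recurrent_state P s \<and> \<not> summable (\<lambda>n. real n * first_pass P n s s)"

definition irreducible_on :: "(cstate \<Rightarrow> cstate \<Rightarrow> real) \<Rightarrow> cstate set \<Rightarrow> bool" where
  "irreducible_on P A \<longleftrightarrow> (\<forall>s\<in>A. \<forall>t\<in>A. \<exists>n. nstep P n s t > 0)"

end

theory Submission
  imports Defs
begin

text \<open>
  As a Markov chain on pairs (position, last direction) the walk has exactly two successors
  from every state, \<open>(x + 1, +1)\<close> and \<open>(x - 1, -1)\<close>, so the classical potential theory of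
  birth-death chains carries over.  Let \<open>\<rho>(x)\<close> be the product of the persistence ratios
  \<open>q\<^sub>+\<^sub>+(y) / q\<^sub>-\<^sub>-(y)\<close> for \<open>y \<le> x\<close>.  An explicit scale function built from \<open>1 / \<rho>\<close> is
  harmonic away from the origin; the walk is recurrent when it is unbounded (Lyapunov
  criterion) and transient when it is bounded (it then yields a supersolution of the hitting
  equation that stays below \<open>1\<close>).  An explicit mean hitting time built from \<open>\<rho>\<close> has drift
  \<open>-1\<close>, so a recurrent walk is positive recurrent when \<open>\<Sum> \<rho>(x) < \<infinity>\<close> (Foster criterion);
  truncations of it bound the mean return time from below, so it is infinite when
  \<open>\<Sum> \<rho>(x) = \<infinity>\<close>.  Finally the hypotheses give \<open>ln (q\<^sub>+\<^sub>+(y) / q\<^sub>-\<^sub>-(y)) = \<alpha> / y + O(y powr (-1 - \<delta>))\<close>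
  with \<open>\<alpha> = c / q\<close>, hence \<open>\<rho>(x) \<asymp> x powr \<alpha>\<close>, and the regimes \<open>\<alpha> < -1\<close>, \<open>\<alpha> > 1\<close> and
  \<open>|\<alpha>| \<le> 1\<close> are exactly \<open>c < -q\<close>, \<open>c > q\<close> and \<open>|c| \<le> q\<close>.
\<close>

lemma affine_contraction_iterate_le:
  fixes M :: "nat \<Rightarrow> real"
  assumes step: "\<And>k. M (k + L) \<le> b + r * M k"
    and "M 0 \<le> 0" "0 \<le> b" "0 \<le> r" "r < 1"
  shows "M (j * L) \<le> b / (1 - r)"
proof (induction j)
  case 0
  have "0 \<le> b / (1 - r)" using assms by simp
  then show ?case using assms(2) by simp
next
  case (Suc j)
  have "M (Suc j * L) \<le> b + r * M (j * L)"
    using step[of "j * L"] by (simp add: add.commute)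
  also have "\<dots> \<le> b + r * (b / (1 - r))"
    using Suc assms(4) by (intro add_left_mono mult_left_mono)
  also have "\<dots> = b / (1 - r)"
    using assms by (simp add: field_simps)
  finally show ?case .
qed

section \<open>Transition operators of the walk\<close>

locale crw_chain =
  fixes qq :: "int \<Rightarrow> int \<Rightarrow> nat \<Rightarrow> real"
  assumes nonneg: "\<And>i j x. i \<in> dirs \<Longrightarrow> j \<in> dirs \<Longrightarrow> qq i j x \<ge> 0"
    and stoch: "\<And>i x. i \<in> dirs \<Longrightarrow> qq i 1 x + qq i (-1) x = 1"
    and boundary: "\<And>i. i \<in> dirs \<Longrightarrow> qq i (-1) 0 = 0"
    and irred: "irreducible_on (crw_kernel qq) crw_states"
begin

abbreviation P :: "cstate \<Rightarrow> cstate \<Rightarrow> real" where "P \<equiv> crw_kernel qq"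

definition up :: "cstate \<Rightarrow> cstate" where "up s = (fst s + 1, 1)"

text \<open>At position 0 the truncated subtraction makes \<open>dn s = (0, -1)\<close>, but there
  \<open>p_dn s = 0\<close> by the boundary condition.\<close>
definition dn :: "cstate \<Rightarrow> cstate" where "dn s = (fst s - 1, -1)"

definition p_up :: "cstate \<Rightarrow> real" where
  "p_up s = (if snd s \<in> dirs then qq (snd s) 1 (fst s) else 0)"

definition p_dn :: "cstate \<Rightarrow> real" where
  "p_dn s = (if snd s \<in> dirs then qq (snd s) (-1) (fst s) else 0)"

definition trans_op :: "(cstate \<Rightarrow> real) \<Rightarrow> cstate \<Rightarrow> real" where
  "trans_op f s = p_up s * f (up s) + p_dn s * f (dn s)"

definition killed_op :: "cstate \<Rightarrow> (cstate \<Rightarrow> real) \<Rightarrow> cstate \<Rightarrow> real" where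
  "killed_op t f = trans_op (f(t := 0))"

lemma up_neq_dn [simp]: "up s \<noteq> dn s" "dn s \<noteq> up s"
  by (auto simp: up_def dn_def)

lemma fst_up [simp]: "fst (up s) = fst s + 1" and snd_up [simp]: "snd (up s) = 1"
  and fst_dn [simp]: "fst (dn s) = fst s - 1" and snd_dn [simp]: "snd (dn s) = -1"
  by (auto simp: up_def dn_def)

lemma up_neq_self [simp]: "up s \<noteq> s"
  by (cases s) (auto simp: up_def)

lemma up_in_states [simp]: "up s \<in> crw_states" and dn_in_states [simp]: "dn s \<in> crw_states"
  by (auto simp: crw_states_def up_def dn_def dirs_def)

lemma snd_state_in_dirs: "s \<in> crw_states \<Longrightarrow> snd s \<in> dirs"
  by (auto simp: crw_states_def)

lemma finite_states_below: "finite {v \<in> crw_states. fst v \<le> X}"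
proof (rule finite_subset)
  show "{v \<in> crw_states. fst v \<le> X} \<subseteq> {0..X} \<times> dirs" by (auto simp: crw_states_def)
qed (simp add: dirs_def)

lemma p_up_nonneg: "p_up s \<ge> 0" and p_dn_nonneg: "p_dn s \<ge> 0"
  by (auto simp: p_up_def p_dn_def dirs_def intro: nonneg)

lemma p_up_p_dn_sum: "snd s \<in> dirs \<Longrightarrow> p_up s + p_dn s = 1"
  by (auto simp: p_up_def p_dn_def stoch)

lemma p_up_p_dn_le_1: "p_up s + p_dn s \<le> 1"
  by (cases "snd s \<in> dirs") (auto simp: p_up_def p_dn_def stoch)

lemma kernel_eq: "P s v = (if v = up s then p_up s else 0) + (if v = dn s then p_dn s else 0)"
proof -
  obtain x i where s: "s = (x, i)" by (cases s)
  obtain y j where v: "v = (y, j)" by (cases v)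
  show ?thesis
    using boundary[of i]
    by (cases "x = 0") (auto simp: s v crw_kernel_def p_up_def p_dn_def up_def dn_def dirs_def)
qed

lemma infsum_kernel_mult: "infsum (\<lambda>v. P s v * f v) UNIV = trans_op f s"
proof -
  have "infsum (\<lambda>v. P s v * f v) UNIV = infsum (\<lambda>v. P s v * f v) {up s, dn s}"
    by (rule infsum_cong_neutral) (auto simp: kernel_eq)
  then show ?thesis by (simp add: kernel_eq trans_op_def)
qed

lemma trans_op_mono:
  "f (up s) \<le> g (up s) \<Longrightarrow> f (dn s) \<le> g (dn s) \<Longrightarrow> trans_op f s \<le> trans_op g s"
  unfolding trans_op_def by (intro add_mono mult_left_mono) (auto simp: p_up_nonneg p_dn_nonneg)

lemma trans_op_nonneg: "f (up s) \<ge> 0 \<Longrightarrow> f (dn s) \<ge> 0 \<Longrightarrow> trans_op f s \<ge> 0"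
  using trans_op_mono[of "\<lambda>_. 0" s f] by (simp add: trans_op_def)

lemma trans_op_const: "snd s \<in> dirs \<Longrightarrow> trans_op (\<lambda>_. a) s = a"
  using p_up_p_dn_sum[of s] by (simp add: trans_op_def flip: distrib_right)

lemma trans_op_le_const:
  assumes "f (up s) \<le> a" "f (dn s) \<le> a" "0 \<le> a"
  shows "trans_op f s \<le> a"
proof -
  have "trans_op f s \<le> trans_op (\<lambda>_. a) s" using assms by (intro trans_op_mono) auto
  also have "\<dots> = a * (p_up s + p_dn s)" by (simp add: trans_op_def algebra_simps)
  also have "\<dots> \<le> a" using p_up_p_dn_le_1[of s] \<open>0 \<le> a\<close> by (simp add: mult_left_le)
  finally show ?thesis .
qed

lemma killed_op_eq:
  "killed_op t f s = (if up s = t then 0 else p_up s * f (up s))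
                   + (if dn s = t then 0 else p_dn s * f (dn s))"
  by (simp add: killed_op_def trans_op_def)

lemma kernel_plus_killed_op: "P s t + killed_op t f s = trans_op (f(t := 1)) s"
  by (auto simp: kernel_eq killed_op_eq trans_op_def)

lemma killed_op_mono:
  "f (up s) \<le> g (up s) \<Longrightarrow> f (dn s) \<le> g (dn s) \<Longrightarrow> killed_op t f s \<le> killed_op t g s"
  unfolding killed_op_def by (rule trans_op_mono) auto

lemma killed_op_le_trans_op:
  "f (up s) \<ge> 0 \<Longrightarrow> f (dn s) \<ge> 0 \<Longrightarrow> killed_op t f s \<le> trans_op f s"
  unfolding killed_op_def by (rule trans_op_mono) auto

lemma killed_op_linear:
  "killed_op t (\<lambda>u. a * f u + b * g u) s = a * killed_op t f s + b * killed_op t g s"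
  by (simp add: killed_op_eq algebra_simps)

lemma killed_op_sum: "killed_op t (\<lambda>u. \<Sum>j\<in>A. f j u) s = (\<Sum>j\<in>A. killed_op t (f j) s)"
  by (simp add: killed_op_eq sum_distrib_left sum.distrib)

lemma killed_op_const_le: "0 \<le> a \<Longrightarrow> killed_op t (\<lambda>_. a) s \<le> a"
  unfolding killed_op_def by (rule trans_op_le_const) auto

lemma trans_op_max_principle:
  assumes "snd s \<in> dirs" "m \<le> trans_op f s" "f (up s) \<le> m" "f (dn s) \<le> m"
  shows "(p_up s > 0 \<longrightarrow> f (up s) = m) \<and> (p_dn s > 0 \<longrightarrow> f (dn s) = m)"
proof -
  have "m = p_up s * m + p_dn s * m"
    using p_up_p_dn_sum[OF assms(1)] by (metis distrib_right mult_1)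
  moreover have "p_up s * f (up s) \<le> p_up s * m" "p_dn s * f (dn s) \<le> p_dn s * m"
    using assms(3,4) by (auto intro: mult_left_mono p_up_nonneg p_dn_nonneg)
  ultimately have "p_up s * m \<le> p_up s * f (up s)" "p_dn s * m \<le> p_dn s * f (dn s)"
    using assms(2) unfolding trans_op_def by linarith+
  then show ?thesis using assms(3,4) by (auto simp: mult_le_cancel_left_pos)
qed

section \<open>First passages and hitting probabilities\<close>

lemma nstep_Suc_trans_op: "nstep P (Suc n) s v = trans_op (\<lambda>u. nstep P n u v) s"
  by (simp add: infsum_kernel_mult)

declare nstep.simps(2) [simp del]

lemma nstep_nonneg: "nstep P n s v \<ge> 0"
  by (induction n arbitrary: s) (simp_all add: nstep_Suc_trans_op trans_op_nonneg)

lemma nstep_Suc_pos_cases: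
  assumes "nstep P (Suc n) u v > 0"
  obtains w where "w = up u \<and> p_up u > 0 \<or> w = dn u \<and> p_dn u > 0" "nstep P n w v > 0"
proof -
  have "p_up u * nstep P n (up u) v + p_dn u * nstep P n (dn u) v > 0"
    using assms by (simp add: nstep_Suc_trans_op trans_op_def)
  then consider "p_up u * nstep P n (up u) v > 0" | "p_dn u * nstep P n (dn u) v > 0"
    using p_up_nonneg[of u] p_dn_nonneg[of u] nstep_nonneg[of n]
    by (smt (verit) mult_nonneg_nonneg)
  then show ?thesis
  proof cases
    case 1
    then show ?thesis using that[of "up u"] p_up_nonneg[of u] by (simp add: zero_less_mult_iff)
  next
    case 2
    then show ?thesis using that[of "dn u"] p_dn_nonneg[of u] by (simp add: zero_less_mult_iff)
  qed
qed

lemma first_pass_Suc_Suc: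
  "first_pass P (Suc (Suc n)) s t = killed_op t (\<lambda>u. first_pass P (Suc n) u t) s"
proof -
  have "first_pass P (Suc (Suc n)) s t
      = infsum (\<lambda>u. P s u * (if u = t then 0 else first_pass P (Suc n) u t)) UNIV"
    by (simp add: if_distrib cong: if_cong)
  then show ?thesis by (simp add: infsum_kernel_mult killed_op_def fun_upd_def)
qed

declare first_pass.simps(3) [simp del]

lemma first_pass_nonneg: "first_pass P n s t \<ge> 0"
proof -
  have "first_pass P (Suc n) s t \<ge> 0" for n s
    by (induction n arbitrary: s)
      (simp_all add: kernel_eq p_up_nonneg p_dn_nonneg first_pass_Suc_Suc killed_op_def
        trans_op_nonneg)
  then show ?thesis by (cases n) auto
qed

definition hit_by :: "cstate \<Rightarrow> nat \<Rightarrow> cstate \<Rightarrow> real" where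
  "hit_by t k s = (\<Sum>n<Suc k. first_pass P n s t)"

definition hit_prob :: "cstate \<Rightarrow> cstate \<Rightarrow> real" where
  "hit_prob t s = (\<Sum>n. first_pass P n s t)"

lemma return_prob_eq_hit_prob: "return_prob P s = hit_prob s s"
  by (simp add: return_prob_def hit_prob_def)

lemma hit_by_0 [simp]: "hit_by t 0 s = 0"
  by (simp add: hit_by_def)

lemma hit_by_Suc: "hit_by t (Suc k) s = P s t + killed_op t (hit_by t k) s"
proof (induction k arbitrary: s)
  case 0
  then show ?case by (simp add: hit_by_def killed_op_eq)
next
  case (Suc k)
  have "hit_by t (Suc (Suc k)) s = hit_by t (Suc k) s + first_pass P (Suc (Suc k)) s t"
    by (simp add: hit_by_def)
  also have "\<dots> = P s t + killed_op t (\<lambda>u. hit_by t k u + first_pass P (Suc k) u t) s"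
    using killed_op_linear[of t 1 "hit_by t k" 1 "\<lambda>u. first_pass P (Suc k) u t" s]
    by (simp add: Suc first_pass_Suc_Suc)
  also have "(\<lambda>u. hit_by t k u + first_pass P (Suc k) u t) = hit_by t (Suc k)"
    by (simp add: hit_by_def fun_eq_iff)
  finally show ?case .
qed

lemma hit_by_nonneg: "hit_by t k s \<ge> 0"
  by (simp add: hit_by_def sum_nonneg first_pass_nonneg)

lemma hit_by_le_1: "hit_by t k s \<le> 1"
proof (induction k arbitrary: s)
  case (Suc k)
  then show ?case
    by (simp add: hit_by_Suc kernel_plus_killed_op trans_op_le_const)
qed simp

lemma hit_by_mono: "k \<le> k' \<Longrightarrow> hit_by t k s \<le> hit_by t k' s"
  unfolding hit_by_def by (intro sum_mono2) (auto simp: first_pass_nonneg)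

lemma summable_first_pass: "summable (\<lambda>n. first_pass P n s t)"
proof (rule summableI_nonneg_bounded)
  show "(\<Sum>i<n. first_pass P i s t) \<le> 1" for n
    using hit_by_le_1[of t "n - 1" s] by (cases n) (auto simp: hit_by_def)
qed (rule first_pass_nonneg)

lemma hit_by_tendsto: "(\<lambda>k. hit_by t k s) \<longlonglongrightarrow> hit_prob t s"
  using LIMSEQ_Suc[OF summable_LIMSEQ[OF summable_first_pass]]
  by (simp add: hit_by_def hit_prob_def)

lemma hit_prob_le_1: "hit_prob t s \<le> 1"
  by (rule LIMSEQ_le_const2[OF hit_by_tendsto]) (auto simp: hit_by_le_1)

lemma hit_by_le_hit_prob: "hit_by t k s \<le> hit_prob t s"
  by (rule LIMSEQ_le_const[OF hit_by_tendsto]) (auto intro: hit_by_mono)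

lemma hit_prob_nonneg: "hit_prob t s \<ge> 0"
  using hit_by_nonneg order_trans hit_by_le_hit_prob by blast

lemma hit_prob_first_step: "hit_prob t s = P s t + killed_op t (hit_prob t) s"
proof (rule LIMSEQ_unique)
  show "(\<lambda>k. hit_by t (Suc k) s) \<longlonglongrightarrow> hit_prob t s"
    using hit_by_tendsto LIMSEQ_Suc by blast
  show "(\<lambda>k. hit_by t (Suc k) s) \<longlonglongrightarrow> P s t + killed_op t (hit_prob t) s"
    unfolding hit_by_Suc killed_op_eq
    by (cases "up s = t"; cases "dn s = t") (auto intro!: tendsto_intros hit_by_tendsto)
qed

lemma hit_prob_le_supersolution:
  assumes "\<And>s. s \<in> crw_states \<Longrightarrow> h s \<ge> 0"
    and "\<And>s. s \<in> crw_states \<Longrightarrow> P s t + killed_op t h s \<le> h s"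
    and "s \<in> crw_states"
  shows "hit_prob t s \<le> h s"
proof -
  have "hit_by t k s \<le> h s" if "s \<in> crw_states" for k s
    using that
  proof (induction k arbitrary: s)
    case (Suc k)
    have "hit_by t (Suc k) s \<le> P s t + killed_op t h s"
      unfolding hit_by_Suc using Suc.IH by (intro add_left_mono killed_op_mono) auto
    then show ?case using assms(2)[OF Suc.prems] by linarith
  qed (simp add: assms(1))
  then show ?thesis using assms(3) by (intro LIMSEQ_le_const2[OF hit_by_tendsto]) auto
qed

section \<open>Irreducibility and recurrence\<close>

lemma trans_op_linear:
  "trans_op (\<lambda>u. a * f u + b * g u) s = a * trans_op f s + b * trans_op g s"
  by (simp add: trans_op_def algebra_simps)

definition closed_set :: "cstate set \<Rightarrow> bool" where
  "closed_set Z \<longleftrightarrow> (\<forall>u\<in>Z. (p_up u > 0 \<longrightarrow> up u \<in> Z) \<and> (p_dn u > 0 \<longrightarrow> dn u \<in> Z))"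

lemma closed_set_nstep:
  assumes "closed_set Z" "u \<in> Z" "nstep P n u v > 0"
  shows "v \<in> Z"
  using assms(2,3)
proof (induction n arbitrary: u)
  case 0
  then show ?case by (simp split: if_splits)
next
  case (Suc n)
  from Suc.prems(2) obtain w where "w = up u \<and> p_up u > 0 \<or> w = dn u \<and> p_dn u > 0"
    and "nstep P n w v > 0"
    by (rule nstep_Suc_pos_cases)
  with Suc.IH[of w] Suc.prems(1) assms(1) show ?case by (auto simp: closed_set_def)
qed

lemma closed_set_contains_states:
  assumes "closed_set Z" "u \<in> Z" "u \<in> crw_states" "v \<in> crw_states"
  shows "v \<in> Z"
proof -
  obtain n where "nstep P n u v > 0" using irred assms(3,4) by (auto simp: irreducible_on_def)
  then show ?thesis using closed_set_nstep assms(1,2) by blast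
qed

lemma qq_dn_dn_pos:
  assumes "x \<ge> 1"
  shows "qq (-1) (-1) x > 0"
proof (rule ccontr)
  assume "\<not> ?thesis"
  then have stuck: "qq (-1) (-1) x = 0" using nonneg[of "-1" "-1" x] by (auto simp: dirs_def)
  let ?Z = "{u :: cstate. fst u > x} \<union> {(x, -1)}"
  have "closed_set ?Z"
    unfolding closed_set_def
  proof
    fix u assume "u \<in> ?Z"
    then consider "u = (x, -1)" | "fst u > x" by auto
    then show "(p_up u > 0 \<longrightarrow> up u \<in> ?Z) \<and> (p_dn u > 0 \<longrightarrow> dn u \<in> ?Z)"
    proof cases
      case 1
      then show ?thesis using stuck by (simp add: p_dn_def dirs_def)
    next
      case 2
      then show ?thesis by (cases u) (auto simp: dn_def)
    qed
  qed
  moreover have "(x + 1, 1) \<in> ?Z" "(x + 1, 1) \<in> crw_states" "(0, -1) \<in> crw_states"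
    by (auto simp: crw_states_def dirs_def)
  ultimately have "(0, -1) \<in> ?Z" by (rule closed_set_contains_states)
  then show False using assms by auto
qed

lemma qq_up_up_pos:
  assumes "x \<ge> 1"
  shows "qq 1 1 x > 0"
proof (rule ccontr)
  assume "\<not> ?thesis"
  then have stuck: "qq 1 1 x = 0" using nonneg[of 1 1 x] by (auto simp: dirs_def)
  let ?Z = "{u :: cstate. fst u < x} \<union> {(x, 1)}"
  have "closed_set ?Z"
    unfolding closed_set_def
  proof
    fix u assume "u \<in> ?Z"
    then consider "u = (x, 1)" | "fst u < x" by auto
    then show "(p_up u > 0 \<longrightarrow> up u \<in> ?Z) \<and> (p_dn u > 0 \<longrightarrow> dn u \<in> ?Z)"
    proof cases
      case 1
      then show ?thesis using stuck assms by (simp add: p_up_def dirs_def)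
    next
      case 2
      then show ?thesis by (cases u) (auto simp: up_def)
    qed
  qed
  moreover have "(0, -1) \<in> ?Z" "(0, -1) \<in> crw_states" "(x + 1, 1) \<in> crw_states"
    using assms by (auto simp: crw_states_def dirs_def)
  ultimately have "(x + 1, 1) \<in> ?Z" by (rule closed_set_contains_states)
  then show False by auto
qed

text \<open>Otherwise the walk would move up forever from \<open>(z + 1, 1)\<close>.\<close>
lemma qq_up_up_lt_1_beyond: "\<exists>y\<ge>z. qq 1 1 y < 1"
proof (rule ccontr)
  assume "\<not> ?thesis"
  then have "qq 1 (-1) y = 0" if "y \<ge> z" for y
    using that stoch[of 1 y] nonneg[of 1 "-1" y] by (force simp: dirs_def)
  then have "closed_set {u :: cstate. fst u \<ge> z \<and> snd u = 1}"
    by (auto simp: closed_set_def p_dn_def)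
  moreover have "(z + 1, 1) \<in> crw_states" "(0, -1) \<in> crw_states"
    by (auto simp: crw_states_def dirs_def)
  ultimately show False
    using closed_set_contains_states[of "{u. fst u \<ge> z \<and> snd u = 1}" "(z + 1, 1)" "(0, -1)"]
    by auto
qed

lemma hit_prob_eq_1_everywhere:
  assumes t: "t \<in> crw_states" and recurrent: "hit_prob t t = 1" and v: "v \<in> crw_states"
  shows "hit_prob t v = 1"
proof -
  let ?Z = "{u \<in> crw_states. hit_prob t u = 1}"
  have "closed_set ?Z"
    unfolding closed_set_def
  proof
    fix u assume u: "u \<in> ?Z"
    let ?f = "(hit_prob t)(t := 1)"
    have "trans_op ?f u = hit_prob t u"
      using hit_prob_first_step[of t u] kernel_plus_killed_op[of u t "hit_prob t"] by (simp only:)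
    then have "1 \<le> trans_op ?f u" using u by simp
    then have "(p_up u > 0 \<longrightarrow> ?f (up u) = 1) \<and> (p_dn u > 0 \<longrightarrow> ?f (dn u) = 1)"
      using u trans_op_max_principle[of u 1 ?f] by (auto simp: snd_state_in_dirs hit_prob_le_1)
    then show "(p_up u > 0 \<longrightarrow> up u \<in> ?Z) \<and> (p_dn u > 0 \<longrightarrow> dn u \<in> ?Z)"
      using recurrent by (auto split: if_splits)
  qed
  then show ?thesis using closed_set_contains_states[of ?Z t v] t v recurrent by simp
qed

definition avoid_prob :: "cstate \<Rightarrow> cstate \<Rightarrow> real" where
  "avoid_prob t s = 1 - hit_prob t s"

lemma avoid_prob_first_step:
  assumes "snd s \<in> dirs"
  shows "avoid_prob t s = killed_op t (avoid_prob t) s"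
  using hit_prob_first_step[of t s] p_up_p_dn_sum[OF assms]
  by (auto simp: avoid_prob_def kernel_eq killed_op_eq algebra_simps)

lemma avoid_prob_nonneg: "avoid_prob t s \<ge> 0" and avoid_prob_le_1: "avoid_prob t s \<le> 1"
  using hit_prob_le_1 hit_prob_nonneg by (auto simp: avoid_prob_def)

lemma avoid_prob_le_trans_op: "snd s \<in> dirs \<Longrightarrow> avoid_prob t s \<le> trans_op (avoid_prob t) s"
  using avoid_prob_first_step killed_op_le_trans_op avoid_prob_nonneg by metis

text \<open>A positive maximum of the avoidance probability over the states would spread along
  all transitions without ever reaching \<open>t\<close> (where the killed equation forces the value 0),
  contradicting irreducibility.\<close>
lemma avoid_prob_max_le_0:
  assumes t: "t \<in> crw_states" and a: "a \<in> crw_states" "avoid_prob t a = M"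
    and max: "\<And>u. u \<in> crw_states \<Longrightarrow> avoid_prob t u \<le> M"
  shows "M \<le> 0"
proof (rule ccontr)
  assume "\<not> M \<le> 0"
  then have M: "M > 0" by simp
  let ?Z = "{s \<in> crw_states. avoid_prob t s = M \<and> s \<noteq> t}"
  have spread: "(p_up s > 0 \<longrightarrow> up s \<in> ?Z) \<and> (p_dn s > 0 \<longrightarrow> dn s \<in> ?Z)"
    if s: "s \<in> crw_states" "avoid_prob t s = M" for s
  proof -
    let ?f = "(avoid_prob t)(t := 0)"
    have "trans_op ?f s = avoid_prob t s"
      using avoid_prob_first_step[OF snd_state_in_dirs[OF s(1)], of t]
      unfolding killed_op_def by (simp only:)
    then have "M \<le> trans_op ?f s" using s by simp
    then have "(p_up s > 0 \<longrightarrow> ?f (up s) = M) \<and> (p_dn s > 0 \<longrightarrow> ?f (dn s) = M)"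
      using s M max trans_op_max_principle[of s M ?f] by (auto simp: snd_state_in_dirs)
    then show ?thesis using M by (auto split: if_splits)
  qed
  then have "closed_set ?Z" by (auto simp: closed_set_def)
  obtain s0 where "s0 \<in> ?Z"
  proof (cases "p_up a > 0")
    case True
    then show ?thesis using that spread[OF a] by blast
  next
    case False
    then have "p_dn a > 0"
      using p_up_p_dn_sum[OF snd_state_in_dirs[OF a(1)]] p_up_nonneg[of a] by linarith
    then show ?thesis using that spread[OF a] by blast
  qed
  then have "t \<in> ?Z" using closed_set_contains_states[OF \<open>closed_set ?Z\<close>, of s0 t] t by auto
  then show False by simp
qed

lemma avoid_prob_le_max_on_finite:
  assumes t: "t \<in> A" and A: "finite A" "A \<subseteq> crw_states"
    and \<Psi>_super: "\<And>s. s \<in> crw_states \<Longrightarrow> s \<notin> A \<Longrightarrow> trans_op \<Psi> s \<le> \<Psi> s"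
    and \<Psi>_finite: "\<And>K. finite {s \<in> crw_states. \<Psi> s \<le> K}"
    and \<epsilon>: "\<epsilon> > 0" and u: "u \<in> crw_states"
  shows "avoid_prob t u - \<epsilon> * \<Psi> u \<le> Max ((\<lambda>a. avoid_prob t a - \<epsilon> * \<Psi> a) ` A)"
proof (rule ccontr)
  define h where "h s = avoid_prob t s - \<epsilon> * \<Psi> s" for s
  assume "\<not> ?thesis"
  then have hu: "Max (h ` A) < h u" by (simp add: h_def)
  define E where "E = {s \<in> crw_states. \<Psi> s \<le> \<Psi> u + 1 / \<epsilon>}"
  have E: "finite E" "u \<in> E" using \<Psi>_finite u \<epsilon> by (auto simp: E_def)
  have "Max (h ` E) \<in> h ` E" using E by (intro Max_in) auto
  then obtain w where w: "w \<in> E" "h w = Max (h ` E)" by auto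
  have h_le_hw: "h s \<le> h w" if "s \<in> crw_states" for s
  proof (cases "s \<in> E")
    case True
    then show ?thesis using w E by simp
  next
    case False
    then have "\<epsilon> * \<Psi> s > \<epsilon> * \<Psi> u + 1"
      using that \<epsilon> by (simp add: E_def field_simps)
    then have "h s < h u"
      using avoid_prob_le_1[of t s] avoid_prob_nonneg[of t u] by (simp add: h_def)
    also have "h u \<le> h w" using w E by simp
    finally show ?thesis by simp
  qed
  have hA: "h a < h w" if "a \<in> A" for a
  proof -
    have "h a \<le> Max (h ` A)" using A that by (intro Max_ge) auto
    then show ?thesis using hu h_le_hw[OF u] by linarith
  qed
  let ?Z = "{s \<in> crw_states. h s = h w}"
  have "closed_set ?Z"
    unfolding closed_set_def
  proof
    fix s assume s: "s \<in> ?Z"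
    then have "s \<notin> A" using hA by fastforce
    have "trans_op h s = trans_op (avoid_prob t) s - \<epsilon> * trans_op \<Psi> s"
      using trans_op_linear[of 1 "avoid_prob t" "-\<epsilon>" \<Psi> s] by (simp add: h_def[abs_def])
    moreover have "\<epsilon> * trans_op \<Psi> s \<le> \<epsilon> * \<Psi> s"
      using \<Psi>_super[of s] s \<open>s \<notin> A\<close> \<epsilon> by simp
    ultimately have "h s \<le> trans_op h s"
      using avoid_prob_le_trans_op[OF snd_state_in_dirs, of s t] s by (simp add: h_def)
    then show "(p_up s > 0 \<longrightarrow> up s \<in> ?Z) \<and> (p_dn s > 0 \<longrightarrow> dn s \<in> ?Z)"
      using s trans_op_max_principle[of s "h w" h] h_le_hw snd_state_in_dirs by auto
  qed
  moreover have "w \<in> crw_states" using w by (simp add: E_def)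
  ultimately have "t \<in> ?Z" using closed_set_contains_states[of ?Z w t] t A by auto
  then show False using hA[OF t] by simp
qed

text \<open>The slack \<open>\<epsilon> * \<Psi>\<close> makes the avoidance probability attain its maximum over the
  states, which is then zero.\<close>
lemma recurrence_criterion:
  assumes t: "t \<in> A" and A: "finite A" "A \<subseteq> crw_states"
    and \<Psi>_nonneg: "\<And>s. s \<in> crw_states \<Longrightarrow> \<Psi> s \<ge> 0"
    and \<Psi>_super: "\<And>s. s \<in> crw_states \<Longrightarrow> s \<notin> A \<Longrightarrow> trans_op \<Psi> s \<le> \<Psi> s"
    and \<Psi>_finite: "\<And>K. finite {s \<in> crw_states. \<Psi> s \<le> K}"
  shows "hit_prob t t = 1"
proof -
  define M where "M = Max (avoid_prob t ` A)"
  have le_M: "avoid_prob t u \<le> M" if u: "u \<in> crw_states" for u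
  proof (rule field_le_epsilon)
    fix e :: real assume e: "e > 0"
    define \<epsilon> where "\<epsilon> = e / (\<Psi> u + 1)"
    have \<Psi>u: "\<Psi> u \<ge> 0" using \<Psi>_nonneg u by simp
    then have \<epsilon>: "\<epsilon> > 0" using e by (simp add: \<epsilon>_def)
    have "Max ((\<lambda>a. avoid_prob t a - \<epsilon> * \<Psi> a) ` A) \<in> (\<lambda>a. avoid_prob t a - \<epsilon> * \<Psi> a) ` A"
      using A t by (intro Max_in) auto
    then obtain a where a: "a \<in> A"
      "Max ((\<lambda>a. avoid_prob t a - \<epsilon> * \<Psi> a) ` A) = avoid_prob t a - \<epsilon> * \<Psi> a"
      by auto
    have "avoid_prob t u - \<epsilon> * \<Psi> u \<le> avoid_prob t a - \<epsilon> * \<Psi> a"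
      using avoid_prob_le_max_on_finite[OF t A \<Psi>_super \<Psi>_finite \<epsilon> u] a by simp
    also have "\<dots> \<le> M"
    proof -
      have "avoid_prob t a \<le> M" using a A by (simp add: M_def)
      moreover have "\<epsilon> * \<Psi> a \<ge> 0" using a A \<Psi>_nonneg[of a] \<epsilon> by auto
      ultimately show ?thesis by linarith
    qed
    finally have "avoid_prob t u \<le> M + \<epsilon> * \<Psi> u" by simp
    also have "\<epsilon> * \<Psi> u \<le> e"
      using e \<Psi>u by (simp add: \<epsilon>_def field_simps)
    finally show "avoid_prob t u \<le> M + e" by simp
  qed
  have "M \<in> avoid_prob t ` A" unfolding M_def using A t by (intro Max_in) auto
  then obtain a where "a \<in> A" "avoid_prob t a = M" by auto
  then have "M \<le> 0" using avoid_prob_max_le_0 A t le_M by blast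
  then show ?thesis
    using le_M[of t] A t hit_prob_le_1[of t t] by (auto simp: avoid_prob_def)
qed

section \<open>Mean hitting times\<close>

lemma hit_prob_pos:
  assumes s: "s \<in> crw_states" and t: "t \<in> crw_states"
  shows "hit_prob t s > 0"
proof -
  have succ: "(p_up u > 0 \<longrightarrow> up u \<noteq> t \<and> hit_prob t (up u) = 0)
      \<and> (p_dn u > 0 \<longrightarrow> dn u \<noteq> t \<and> hit_prob t (dn u) = 0)" if "hit_prob t u = 0" for u
  proof -
    let ?f = "(hit_prob t)(t := 1)"
    have "p_up u * ?f (up u) + p_dn u * ?f (dn u) = 0"
      using that hit_prob_first_step[of t u] kernel_plus_killed_op[of u t "hit_prob t"]
      by (simp add: trans_op_def)
    moreover have "?f v \<ge> 0" for v by (simp add: hit_prob_nonneg)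
    ultimately have "p_up u * ?f (up u) = 0" "p_dn u * ?f (dn u) = 0"
      using p_up_nonneg[of u] p_dn_nonneg[of u] by (simp_all add: add_nonneg_eq_0_iff)
    then show ?thesis by (auto split: if_splits)
  qed
  let ?Z = "{u \<in> crw_states. hit_prob t u = 0 \<and> u \<noteq> t}"
  have "closed_set ?Z"
    using succ by (auto simp: closed_set_def)
  then have off_t: "hit_prob t u > 0" if "u \<in> crw_states" "u \<noteq> t" for u
    using that closed_set_contains_states[of ?Z u t] t hit_prob_nonneg[of t u] by force
  show ?thesis
  proof (cases "s = t")
    case True
    show ?thesis
    proof (rule ccontr)
      assume "\<not> ?thesis"
      then have "hit_prob t t = 0" using True hit_prob_nonneg[of t t] by simp
      moreover have "p_up t > 0 \<or> p_dn t > 0"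
        using p_up_p_dn_sum[OF snd_state_in_dirs[OF t]] p_up_nonneg[of t] by linarith
      ultimately show False using succ[of t] off_t[of "up t"] off_t[of "dn t"] by auto
    qed
  qed (use off_t s in auto)
qed

lemma hit_by_pos:
  assumes "s \<in> crw_states" "t \<in> crw_states"
  shows "\<exists>n. hit_by t n s > 0"
proof -
  have "eventually (\<lambda>n. hit_by t n s > 0) sequentially"
    using hit_prob_pos[OF assms] by (rule order_tendstoD(1)[OF hit_by_tendsto])
  then show ?thesis by (meson eventually_sequentially order_refl)
qed

definition avoid_by :: "cstate \<Rightarrow> nat \<Rightarrow> cstate \<Rightarrow> real" where
  "avoid_by t k s = 1 - hit_by t k s"

lemma avoid_by_Suc: "snd s \<in> dirs \<Longrightarrow> avoid_by t (Suc k) s = killed_op t (avoid_by t k) s"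
  using hit_by_Suc[of t k s] p_up_p_dn_sum[of s]
  by (auto simp: avoid_by_def kernel_eq killed_op_eq algebra_simps)

lemma avoid_by_nonneg: "avoid_by t k s \<ge> 0"
  using hit_by_le_1 by (simp add: avoid_by_def)

lemma avoid_by_tendsto: "(\<lambda>k. avoid_by t k s) \<longlonglongrightarrow> avoid_prob t s"
  unfolding avoid_by_def avoid_prob_def by (intro tendsto_intros hit_by_tendsto)

text \<open>\<open>hit_time_trunc t k s\<close> is the mean of \<open>min T k\<close>, where \<open>T \<ge> 1\<close> is the
  hitting time of \<open>t\<close> from \<open>s\<close>.\<close>
definition hit_time_trunc :: "cstate \<Rightarrow> nat \<Rightarrow> cstate \<Rightarrow> real" where
  "hit_time_trunc t k s = (\<Sum>j<k. avoid_by t j s)"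

lemma hit_time_trunc_0 [simp]: "hit_time_trunc t 0 s = 0"
  by (simp add: hit_time_trunc_def)

lemma hit_time_trunc_Suc:
  assumes "snd s \<in> dirs"
  shows "hit_time_trunc t (Suc k) s = 1 + killed_op t (hit_time_trunc t k) s"
proof -
  have "hit_time_trunc t (Suc k) s = avoid_by t 0 s + (\<Sum>j<k. avoid_by t (Suc j) s)"
    unfolding hit_time_trunc_def by (rule sum.lessThan_Suc_shift)
  also have "\<dots> = 1 + (\<Sum>j<k. killed_op t (avoid_by t j) s)"
    using assms by (simp add: avoid_by_Suc avoid_by_def[of t 0])
  also have "(\<Sum>j<k. killed_op t (avoid_by t j) s) = killed_op t (hit_time_trunc t k) s"
    unfolding hit_time_trunc_def killed_op_sum ..
  finally show ?thesis .
qed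

lemma hit_time_trunc_nonneg: "hit_time_trunc t k s \<ge> 0"
  by (simp add: hit_time_trunc_def sum_nonneg avoid_by_nonneg)

lemma hit_time_trunc_mono: "k \<le> k' \<Longrightarrow> hit_time_trunc t k s \<le> hit_time_trunc t k' s"
  unfolding hit_time_trunc_def by (intro sum_mono2) (auto simp: avoid_by_nonneg)

lemma hit_time_trunc_self:
  "hit_time_trunc t k t = real k * (1 - hit_by t k t) + (\<Sum>n<Suc k. real n * first_pass P n t t)"
proof (induction k)
  case (Suc k)
  have "hit_by t (Suc k) t = hit_by t k t + first_pass P (Suc k) t t"
    by (simp add: hit_by_def)
  then show ?case using Suc by (simp add: hit_time_trunc_def avoid_by_def algebra_simps)
qed simp

lemma summable_return_time_if_bounded:
  assumes "\<And>k. hit_time_trunc t k t \<le> K"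
  shows "summable (\<lambda>n. real n * first_pass P n t t)"
proof (rule summableI_nonneg_bounded)
  show "(\<Sum>i<n. real i * first_pass P i t t) \<le> K" for n
  proof -
    have "(\<Sum>i<n. real i * first_pass P i t t) \<le> (\<Sum>i<Suc n. real i * first_pass P i t t)"
      by (intro sum_mono2) (auto simp: first_pass_nonneg)
    also have "\<dots> \<le> hit_time_trunc t n t"
      using hit_time_trunc_self[of t n] hit_by_le_1[of t n t] by simp
    finally show ?thesis using assms[of n] by linarith
  qed
qed (simp add: first_pass_nonneg)

lemma hit_time_trunc_le_return_time:
  assumes summable: "summable (\<lambda>n. real n * first_pass P n t t)"
    and recurrent: "hit_prob t t = 1"
  shows "hit_time_trunc t k t \<le> 2 * (\<Sum>n. real n * first_pass P n t t)"
proof -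
  let ?f = "\<lambda>n. first_pass P n t t" and ?g = "\<lambda>n. real n * first_pass P n t t"
  have g_nonneg: "?g n \<ge> 0" for n by (simp add: first_pass_nonneg)
  have tail_f: "summable (\<lambda>n. ?f (n + Suc k))" and tail_g: "summable (\<lambda>n. ?g (n + Suc k))"
    using summable_ignore_initial_segment summable_first_pass summable by blast+
  have "1 - hit_by t k t = (\<Sum>n. ?f (n + Suc k))"
    using suminf_split_initial_segment[OF summable_first_pass[of t t], of "Suc k"] recurrent
    by (simp add: hit_prob_def hit_by_def)
  then have "real k * (1 - hit_by t k t) = (\<Sum>n. real k * ?f (n + Suc k))"
    using tail_f by (simp add: suminf_mult)
  also have "\<dots> \<le> (\<Sum>n. ?g (n + Suc k))"
    using tail_f tail_g
    by (intro suminf_le) (auto intro!: mult_right_mono simp: first_pass_nonneg summable_mult)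
  also have "\<dots> \<le> (\<Sum>n. ?g n)"
    using suminf_split_initial_segment[OF summable, of "Suc k"] g_nonneg
    by (simp add: sum_nonneg)
  finally have "real k * (1 - hit_by t k t) \<le> (\<Sum>n. ?g n)" .
  moreover have "(\<Sum>n<Suc k. ?g n) \<le> (\<Sum>n. ?g n)"
    using summable g_nonneg by (intro sum_le_suminf) auto
  ultimately show ?thesis using hit_time_trunc_self[of t k] by simp
qed

lemma hit_time_trunc_add_le:
  assumes "\<And>v. v \<in> crw_states \<Longrightarrow> fst v \<le> X + j \<Longrightarrow> hit_time_trunc t k v \<le> C"
    and "s \<in> crw_states" "fst s \<le> X"
  shows "hit_time_trunc t (k + j) s \<le> real j + C * avoid_by t j s"
  using assms
proof (induction j arbitrary: X s)
  case 0
  then show ?case by (simp add: avoid_by_def)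
next
  case (Suc j)
  have IH: "hit_time_trunc t (k + j) u \<le> real j + C * avoid_by t j u" if "u = up s \<or> u = dn s" for u
    using Suc.IH[of "X + 1" u] Suc.prems that by auto
  have dirs: "snd s \<in> dirs" using Suc.prems(2) by (rule snd_state_in_dirs)
  have "hit_time_trunc t (k + Suc j) s = 1 + killed_op t (hit_time_trunc t (k + j)) s"
    using hit_time_trunc_Suc[OF dirs] by simp
  also have "\<dots> \<le> 1 + killed_op t (\<lambda>u. real j * 1 + C * avoid_by t j u) s"
    using IH by (intro add_left_mono killed_op_mono) auto
  also have "\<dots> = 1 + real j * killed_op t (\<lambda>_. 1) s + C * avoid_by t (Suc j) s"
    by (simp only: killed_op_linear avoid_by_Suc[OF dirs])
  also have "\<dots> \<le> 1 + real j + C * avoid_by t (Suc j) s"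
    using killed_op_const_le[of 1 t s] by (simp add: mult_left_le)
  finally show ?case by simp
qed

lemma hit_time_trunc_le_lyapunov:
  assumes \<Phi>_nonneg: "\<And>s. s \<in> crw_states \<Longrightarrow> \<Phi> s \<ge> 0"
    and \<Phi>_drift: "\<And>s. s \<in> crw_states \<Longrightarrow> s \<notin> B \<Longrightarrow> 1 + trans_op \<Phi> s \<le> \<Phi> s"
    and M: "\<And>k s. s \<in> B \<Longrightarrow> hit_time_trunc t k s \<le> M k" "M 0 \<ge> 0" "mono M"
    and s: "s \<in> crw_states" "s \<notin> B"
  shows "hit_time_trunc t k s \<le> \<Phi> s + M k"
  using s
proof (induction k arbitrary: s)
  case 0
  then show ?case using \<Phi>_nonneg M(2) by simp
next
  case (Suc k)
  have dirs: "snd s \<in> dirs" using Suc.prems(1) by (rule snd_state_in_dirs)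
  have bound: "hit_time_trunc t k u \<le> \<Phi> u + M k" if "u \<in> crw_states" for u
    using Suc.IH[OF that] M(1)[of u k] \<Phi>_nonneg[OF that] by (cases "u \<in> B") auto
  have "hit_time_trunc t (Suc k) s \<le> 1 + trans_op (hit_time_trunc t k) s"
    using hit_time_trunc_Suc[OF dirs] killed_op_le_trans_op hit_time_trunc_nonneg by simp
  also have "\<dots> \<le> 1 + trans_op (\<lambda>u. 1 * \<Phi> u + M k * 1) s"
    using bound by (intro add_left_mono trans_op_mono) auto
  also have "\<dots> = 1 + trans_op \<Phi> s + M k"
    by (simp only: trans_op_linear trans_op_const[OF dirs])
  also have "\<dots> \<le> \<Phi> s + M (Suc k)"
    using \<Phi>_drift[OF Suc.prems] monoD[OF M(3), of k "Suc k"] by simp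
  finally show ?case .
qed

lemma hit_by_uniformly_pos:
  assumes "finite B" "B \<subseteq> crw_states" "t \<in> crw_states" "B \<noteq> {}"
  obtains L \<epsilon> where "L \<ge> 1" "0 < \<epsilon>" "\<epsilon> \<le> 1" "\<And>s. s \<in> B \<Longrightarrow> \<epsilon> \<le> hit_by t L s"
proof -
  have "\<forall>s\<in>B. \<exists>n. hit_by t n s > 0" using hit_by_pos assms(2,3) by blast
  then obtain n where n: "\<And>s. s \<in> B \<Longrightarrow> hit_by t (n s) s > 0" by metis
  define L where "L = Max (n ` B)"
  have pos: "hit_by t L s > 0" if "s \<in> B" for s
    using n[OF that] hit_by_mono[of "n s" L t s] assms(1) that by (force simp: L_def)
  then have "L \<ge> 1"
    using assms(4) by (cases L) fastforce+
  define \<epsilon> where "\<epsilon> = Min ((\<lambda>s. hit_by t L s) ` B)"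
  have "\<epsilon> \<in> (\<lambda>s. hit_by t L s) ` B" unfolding \<epsilon>_def using assms by (intro Min_in) auto
  then obtain s0 where "s0 \<in> B" "\<epsilon> = hit_by t L s0" by blast
  then have "0 < \<epsilon>" "\<epsilon> \<le> 1" using pos hit_by_le_1[of t L s0] by auto
  moreover have "\<epsilon> \<le> hit_by t L s" if "s \<in> B" for s
    unfolding \<epsilon>_def using assms that by (intro Min_le) auto
  ultimately show ?thesis using that \<open>L \<ge> 1\<close> by blast
qed

text \<open>Within \<open>L\<close> steps the walk hits \<open>t\<close> from \<open>B\<close> with probability at least \<open>\<epsilon>\<close>,
  so the maxima over \<open>B\<close> of the truncated hitting times contract by the factor \<open>1 - \<epsilon>\<close>.\<close>
lemma foster_criterion:
  assumes t: "t \<in> B" and B: "finite B" "B \<subseteq> crw_states"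
    and \<Phi>_nonneg: "\<And>s. s \<in> crw_states \<Longrightarrow> \<Phi> s \<ge> 0"
    and \<Phi>_drift: "\<And>s. s \<in> crw_states \<Longrightarrow> s \<notin> B \<Longrightarrow> 1 + trans_op \<Phi> s \<le> \<Phi> s"
  shows "\<exists>K. \<forall>k. hit_time_trunc t k t \<le> K"
proof -
  have tS: "t \<in> crw_states" using t B by auto
  define M where "M k = Max (hit_time_trunc t k ` B)" for k
  have le_M: "hit_time_trunc t k s \<le> M k" if "s \<in> B" for k s
    unfolding M_def using B that by (intro Max_ge) auto
  have M_le: "M k \<le> K" if "\<And>s. s \<in> B \<Longrightarrow> hit_time_trunc t k s \<le> K" for k K
    unfolding M_def using B t that by (subst Max_le_iff) auto
  have M_nonneg: "M k \<ge> 0" for k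
    using le_M[OF t, of k] hit_time_trunc_nonneg[of t k t] by linarith
  have "mono M"
    by (intro monoI M_le) (meson le_M hit_time_trunc_mono order_trans)
  have off_B: "hit_time_trunc t k v \<le> \<Phi> v + M k" if "v \<in> crw_states" "v \<notin> B" for k v
    using hit_time_trunc_le_lyapunov[where \<Phi> = \<Phi> and B = B and t = t and M = M]
      \<Phi>_nonneg \<Phi>_drift le_M M_nonneg \<open>mono M\<close> that by blast
  obtain L \<epsilon> where L: "L \<ge> 1" and \<epsilon>: "0 < \<epsilon>" "\<epsilon> \<le> 1"
    and hit_L: "\<And>s. s \<in> B \<Longrightarrow> \<epsilon> \<le> hit_by t L s"
    using hit_by_uniformly_pos[OF B tS] t by blast
  define X where "X = Max (fst ` B)"
  define C where "C = Max (\<Phi> ` {v \<in> crw_states. fst v \<le> X + L})"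
  have X: "fst s \<le> X" if "s \<in> B" for s
    unfolding X_def using B that by (intro Max_ge) auto
  have C: "\<Phi> v \<le> C" if "v \<in> crw_states" "fst v \<le> X + L" for v
    unfolding C_def using that finite_states_below by (intro Max_ge) auto
  have "C \<ge> 0" using C[OF tS] X[OF t] \<Phi>_nonneg[OF tS] by simp
  have contract: "M (k + L) \<le> real L + (C + M k) * (1 - \<epsilon>)" for k
  proof (rule M_le)
    fix s assume s: "s \<in> B"
    have "hit_time_trunc t k v \<le> C + M k" if "v \<in> crw_states" "fst v \<le> X + L" for v
      using le_M[of v k] off_B[of v k] C[OF that] \<open>C \<ge> 0\<close> that by (cases "v \<in> B") auto
    then have "hit_time_trunc t (k + L) s \<le> real L + (C + M k) * avoid_by t L s"
      using s B X[OF s] by (intro hit_time_trunc_add_le) auto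
    also have "\<dots> \<le> real L + (C + M k) * (1 - \<epsilon>)"
      using hit_L[OF s] \<open>C \<ge> 0\<close> M_nonneg[of k]
      by (intro add_left_mono mult_left_mono) (auto simp: avoid_by_def)
    finally show "hit_time_trunc t (k + L) s \<le> real L + (C + M k) * (1 - \<epsilon>)" .
  qed
  have "M (j * L) \<le> (real L + C * (1 - \<epsilon>)) / (1 - (1 - \<epsilon>))" for j
    using contract \<epsilon> \<open>C \<ge> 0\<close> M_le[of 0 0] mult_left_le[of \<epsilon> C]
    by (intro affine_contraction_iterate_le) (auto simp: algebra_simps)
  moreover have "hit_time_trunc t k t \<le> M (k * L)" for k
  proof -
    have "k \<le> k * L" using L by simp
    then show ?thesis using le_M[OF t, of "k * L"] hit_time_trunc_mono[of k "k * L" t t] by simp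
  qed
  ultimately show ?thesis by (meson order_trans)
qed

lemma hit_time_trunc_ge_subsolution:
  assumes Y_sub: "\<And>s. s \<in> crw_states \<Longrightarrow> Y s \<le> 1 + killed_op t Y s"
    and Y_bound: "\<And>s. s \<in> crw_states \<Longrightarrow> Y s \<le> Bd"
    and s: "s \<in> crw_states"
  shows "Y s - Bd * avoid_by t k s \<le> hit_time_trunc t k s"
  using s
proof (induction k arbitrary: s)
  case 0
  then show ?case using Y_bound by (simp add: avoid_by_def)
next
  case (Suc k)
  have dirs: "snd s \<in> dirs" using Suc.prems by (rule snd_state_in_dirs)
  have "Y s - Bd * avoid_by t (Suc k) s \<le> 1 + killed_op t Y s - Bd * killed_op t (avoid_by t k) s"
    using Y_sub[OF Suc.prems] avoid_by_Suc[OF dirs] by simp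
  also have "\<dots> = 1 + killed_op t (\<lambda>u. 1 * Y u + (- Bd) * avoid_by t k u) s"
    by (simp only: killed_op_linear)
  also have "\<dots> \<le> 1 + killed_op t (hit_time_trunc t k) s"
    using Suc.IH[of "up s"] Suc.IH[of "dn s"] by (intro add_left_mono killed_op_mono) auto
  finally show ?case using hit_time_trunc_Suc[OF dirs] by simp
qed

lemma hit_time_trunc_step_lower:
  assumes u: "u \<in> crw_states" and w: "w = up u \<and> p_up u > 0 \<or> w = dn u \<and> p_dn u > 0"
    and "w \<noteq> t"
  shows "\<exists>p>0. \<forall>k. p * hit_time_trunc t k w \<le> hit_time_trunc t (Suc k) u"
proof -
  have eq: "hit_time_trunc t (Suc k) u = 1 + killed_op t (hit_time_trunc t k) u" for k
    using hit_time_trunc_Suc[OF snd_state_in_dirs[OF u]] by simp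
  have nonneg: "p_up u * hit_time_trunc t k (up u) \<ge> 0" "p_dn u * hit_time_trunc t k (dn u) \<ge> 0"
    for k by (simp_all add: p_up_nonneg p_dn_nonneg hit_time_trunc_nonneg)
  from w show ?thesis
  proof
    assume "w = up u \<and> p_up u > 0"
    then show ?thesis using eq nonneg \<open>w \<noteq> t\<close>
      by (intro exI[of _ "p_up u"]) (auto simp: killed_op_eq)
  next
    assume "w = dn u \<and> p_dn u > 0"
    then show ?thesis using eq nonneg \<open>w \<noteq> t\<close>
      by (intro exI[of _ "p_dn u"]) (auto simp: killed_op_eq)
  qed
qed

text \<open>The states failing the claim are closed under transitions, so by irreducibility they
  would contain \<open>v\<close> itself.\<close>
lemma hit_time_trunc_transfer:
  assumes t: "t \<in> crw_states" and v: "v \<in> crw_states"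
  shows "\<exists>m p. p > 0 \<and> (\<forall>k. p * hit_time_trunc t k v \<le> hit_time_trunc t (k + m) t)"
proof (rule ccontr)
  define dominates where "dominates u \<longleftrightarrow>
    (\<exists>m p. p > 0 \<and> (\<forall>k. p * hit_time_trunc t k v \<le> hit_time_trunc t (k + m) u))" for u
  assume "\<not> ?thesis"
  then have "\<not> dominates t" by (simp add: dominates_def)
  have "closed_set {u \<in> crw_states. \<not> dominates u}"
    unfolding closed_set_def
  proof (intro ballI conjI impI)
    fix u assume u: "u \<in> {u \<in> crw_states. \<not> dominates u}"
    have "\<not> dominates w" if w: "w = up u \<and> p_up u > 0 \<or> w = dn u \<and> p_dn u > 0" for w
    proof
      assume "dominates w"
      then obtain m p where p: "p > 0" "\<And>k. p * hit_time_trunc t k v \<le> hit_time_trunc t (k + m) w"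
        by (auto simp: dominates_def)
      have "w \<noteq> t" using \<open>dominates w\<close> \<open>\<not> dominates t\<close> by auto
      then obtain p' where p': "p' > 0" "\<And>k. p' * hit_time_trunc t k w \<le> hit_time_trunc t (Suc k) u"
        using hit_time_trunc_step_lower[of u w t] u w by blast
      have "(p' * p) * hit_time_trunc t k v \<le> hit_time_trunc t (k + Suc m) u" for k
      proof -
        have "p' * (p * hit_time_trunc t k v) \<le> p' * hit_time_trunc t (k + m) w"
          using p(2) p'(1) by (intro mult_left_mono) auto
        then show ?thesis using p'(2)[of "k + m"] by (simp add: mult.assoc)
      qed
      then have "dominates u" using p p' unfolding dominates_def by (metis mult_pos_pos)
      then show False using u by simp
    qed
    then show "p_up u > 0 \<Longrightarrow> up u \<in> {u \<in> crw_states. \<not> dominates u}"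
      and "p_dn u > 0 \<Longrightarrow> dn u \<in> {u \<in> crw_states. \<not> dominates u}"
      by auto
  qed
  moreover have "dominates v"
    unfolding dominates_def by (intro exI[of _ 0] exI[of _ 1]) simp
  ultimately show False
    using closed_set_contains_states[of _ t v] t v \<open>\<not> dominates t\<close> by blast
qed

section \<open>Scale function and speed measure\<close>

lemma qq_dn_up_eq: "qq (-1) 1 y = 1 - qq (-1) (-1) y"
  using stoch[of "-1" y] by (simp add: dirs_def)

lemma qq_up_dn_eq: "qq 1 (-1) y = 1 - qq 1 1 y"
  using stoch[of 1 y] by (simp add: dirs_def)

lemma qq_dn_dn_le_1: "qq (-1) (-1) y \<le> 1" and qq_up_up_le_1: "qq 1 1 y \<le> 1"
  using qq_dn_up_eq[of y] qq_up_dn_eq[of y] nonneg[of "-1" 1 y] nonneg[of 1 "-1" y]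
  by (simp_all add: dirs_def)

lemma qq_dn_up_nonneg: "qq (-1) 1 y \<ge> 0"
  using nonneg[of "-1" 1 y] by (simp add: dirs_def)

text \<open>\<open>ratio_prod\<close> plays the role of the speed measure of a birth-death chain: the scale
  function, the mean hitting times and hence the classification of the walk are all
  expressed through it.\<close>
fun ratio_prod :: "nat \<Rightarrow> real" where
  "ratio_prod 0 = 1"
| "ratio_prod (Suc x) = ratio_prod x * (qq 1 1 (Suc x) / qq (-1) (-1) (Suc x))"

lemma ratio_prod_pos: "ratio_prod x > 0"
  by (induction x) (auto intro!: divide_pos_pos mult_pos_pos qq_up_up_pos qq_dn_dn_pos)

definition scale_incr :: "nat \<Rightarrow> real" where
  "scale_incr y = qq (-1) 1 y / qq (-1) (-1) y / ratio_prod y"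

definition scale_dn :: "nat \<Rightarrow> real" where
  "scale_dn x = (\<Sum>y\<in>{1..x}. scale_incr y)"

definition scale_up :: "nat \<Rightarrow> real" where
  "scale_up x = scale_dn x + 1 / ratio_prod x"

definition scale_fn :: "cstate \<Rightarrow> real" where
  "scale_fn s = (if snd s = -1 then scale_dn (fst s) else scale_up (fst s - 1))"

lemma scale_incr_nonneg: "scale_incr y \<ge> 0"
  unfolding scale_incr_def using nonneg[of "-1" "-1" y] ratio_prod_pos[of y] qq_dn_up_nonneg[of y]
  by (simp add: dirs_def)

lemma scale_incr_0: "scale_incr 0 = 0"
  using boundary[of "-1"] by (simp add: scale_incr_def dirs_def)

lemma scale_dn_Suc: "scale_dn (Suc x) = scale_dn x + scale_incr (Suc x)"
  by (simp add: scale_dn_def)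

lemma scale_dn_eq_partial_sum: "scale_dn x = (\<Sum>y<Suc x. scale_incr y)"
  by (induction x) (simp_all add: scale_dn_def scale_incr_0)

lemma scale_dn_nonneg: "scale_dn x \<ge> 0"
  by (simp add: scale_dn_def sum_nonneg scale_incr_nonneg)

lemma scale_dn_mono: "x \<le> x' \<Longrightarrow> scale_dn x \<le> scale_dn x'"
  unfolding scale_dn_def using scale_incr_nonneg by (intro sum_mono2) auto

lemma scale_dn_less_scale_up: "scale_dn x < scale_up x"
  using ratio_prod_pos[of x] by (simp add: scale_up_def)

lemma scale_fn_nonneg: "scale_fn s \<ge> 0"
  using scale_dn_nonneg scale_dn_less_scale_up by (smt (verit) scale_fn_def)

lemma scale_up_Suc: "scale_up (Suc x) = scale_dn x + 1 / (ratio_prod x * qq 1 1 (Suc x))"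
proof -
  have pos: "qq 1 1 (Suc x) > 0" "qq (-1) (-1) (Suc x) > 0" "ratio_prod x > 0"
    using qq_up_up_pos qq_dn_dn_pos ratio_prod_pos by auto
  then show ?thesis
    by (simp add: scale_up_def scale_dn_Suc scale_incr_def qq_dn_up_eq field_simps)
qed

lemma scale_up_Suc_ge: "scale_up x \<le> scale_up (Suc x)"
  using ratio_prod_pos[of x] qq_up_up_pos[of "Suc x"] qq_up_up_le_1[of "Suc x"]
  by (simp add: scale_up_Suc scale_up_def[of x] frac_le)

lemma scale_harmonic:
  assumes "s \<in> crw_states" "s \<noteq> (0, -1)"
  shows "trans_op scale_fn s = scale_fn s"
proof -
  obtain y i where s: "s = (Suc y, i)" and "i = 1 \<or> i = -1"
    using assms by (cases s; cases "fst s") (auto simp: crw_states_def dirs_def)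
  then consider "i = 1" | "i = -1" by blast
  then show ?thesis
  proof cases
    case 1
    have "trans_op scale_fn s = qq 1 1 (Suc y) * scale_up (Suc y) + qq 1 (-1) (Suc y) * scale_dn y"
      by (simp add: s 1 trans_op_def p_up_def p_dn_def up_def dn_def scale_fn_def dirs_def)
    also have "\<dots> = scale_up y"
      using qq_up_up_pos[of "Suc y"] ratio_prod_pos[of y]
      by (simp add: scale_up_Suc scale_up_def[of y] qq_up_dn_eq field_simps)
    finally show ?thesis by (simp add: s 1 scale_fn_def)
  next
    case 2
    have "trans_op scale_fn s = qq (-1) 1 (Suc y) * scale_up (Suc y) + qq (-1) (-1) (Suc y) * scale_dn y"
      by (simp add: s 2 trans_op_def p_up_def p_dn_def up_def dn_def scale_fn_def dirs_def)
    also have "\<dots> = scale_dn (Suc y)"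
      using qq_dn_dn_pos[of "Suc y"] qq_up_up_pos[of "Suc y"] ratio_prod_pos[of y]
      by (simp add: scale_up_def scale_dn_Suc scale_incr_def qq_dn_up_eq field_simps)
    finally show ?thesis by (simp add: s 2 scale_fn_def)
  qed
qed

lemma recurrent_if_scale_unbounded:
  assumes unbounded: "\<not> bdd_above (range scale_dn)" and t: "t \<in> crw_states"
  shows "hit_prob t t = 1"
proof (rule recurrence_criterion[where \<Psi> = scale_fn and A = "{t, (0, -1)}"])
  show "finite {s \<in> crw_states. scale_fn s \<le> K}" for K
  proof -
    obtain X where X: "scale_dn X > K" using unbounded by (auto simp: bdd_above_def not_le)
    have "fst s \<le> X" if "scale_fn s \<le> K" for s
    proof (rule ccontr)
      assume "\<not> fst s \<le> X"
      then have "X \<le> fst s" "X \<le> fst s - 1" by simp_all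
      then have "scale_dn X \<le> scale_fn s"
        using scale_dn_mono scale_dn_less_scale_up[of "fst s - 1"]
        by (smt (verit) scale_fn_def)
      then show False using X that by simp
    qed
    then have "{s \<in> crw_states. scale_fn s \<le> K} \<subseteq> {v \<in> crw_states. fst v \<le> X}" by auto
    then show ?thesis using finite_states_below finite_subset by blast
  qed
qed (use t scale_harmonic scale_fn_nonneg in \<open>auto simp: crw_states_def dirs_def\<close>)

lemma incseq_scale_up: "incseq scale_up"
  using scale_up_Suc_ge by (simp add: incseq_SucI)

lemma scale_fn_le_scale_up: "scale_fn s \<le> scale_up (fst s)"
  using scale_dn_less_scale_up[of "fst s"] incseqD[OF incseq_scale_up, of "fst s - 1" "fst s"]
  by (auto simp: scale_fn_def)

lemma scale_fn_less_scale_up: "\<exists>y. scale_fn s < scale_up y"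
proof -
  obtain y' where y': "y' \<ge> Suc (fst s)" "qq 1 1 y' < 1"
    using qq_up_up_lt_1_beyond by blast
  then obtain y where y: "y \<ge> fst s" "qq 1 1 (Suc y) < 1" by (cases y') auto
  have "scale_fn s \<le> scale_up y"
    using scale_fn_le_scale_up[of s] incseqD[OF incseq_scale_up y(1)] by simp
  also have "\<dots> < scale_up (Suc y)"
    using ratio_prod_pos[of y] qq_up_up_pos[of "Suc y"] y(2)
    by (simp add: scale_up_Suc scale_up_def[of y] divide_strict_left_mono)
  finally show ?thesis ..
qed

text \<open>For a bounded scale function, \<open>min 1 ((L - scale_fn s) / (L - scale_fn t))\<close> with
  \<open>L = sup scale_fn\<close> is a supersolution for hitting \<open>t\<close> that is smaller than \<open>1\<close> high up.\<close>
lemma transient_if_scale_bounded: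
  assumes bounded: "bdd_above (range scale_up)" and t: "t \<in> crw_states"
  shows "hit_prob t t \<noteq> 1"
proof
  assume recurrent: "hit_prob t t = 1"
  define L where "L = (SUP x. scale_up x)"
  have lim: "scale_up \<longlonglongrightarrow> L"
    unfolding L_def using bounded incseq_scale_up by (rule LIMSEQ_incseq_SUP)
  have le_L: "scale_up x \<le> L" for x
    using bounded by (simp add: L_def cSUP_upper)
  have "scale_fn t < L"
    using scale_fn_less_scale_up[of t] le_L by (meson less_le_trans)
  define D where "D = L - scale_fn t"
  have D: "D > 0" using \<open>scale_fn t < L\<close> by (simp add: D_def)
  define h where "h s = min 1 ((L - scale_fn s) / D)" for s
  have h_nonneg: "h s \<ge> 0" for s
    using scale_fn_le_scale_up[of s] le_L[of "fst s"] D by (simp add: h_def)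
  have h_super: "P s t + killed_op t h s \<le> h s" if s: "s \<in> crw_states" for s
  proof -
    have "h t = 1" using D by (simp add: h_def D_def)
    then have "P s t + killed_op t h s = trans_op h s"
      by (metis fun_upd_triv kernel_plus_killed_op)
    also have "\<dots> \<le> h s"
    proof (cases "s = (0, -1)")
      case True
      then have "h s = 1"
        using D scale_fn_nonneg[of t] by (simp add: h_def D_def scale_fn_def scale_dn_def)
      then show ?thesis by (simp add: h_def trans_op_le_const)
    next
      case False
      have "trans_op h s \<le> trans_op (\<lambda>u. (1 / D) * L * 1 + (- 1 / D) * scale_fn u) s"
        by (intro trans_op_mono) (simp_all add: h_def diff_divide_distrib min_le_iff_disj)
      also have "\<dots> = (L - scale_fn s) / D"
        by (simp only: trans_op_linear trans_op_const[OF snd_state_in_dirs[OF s]]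
            scale_harmonic[OF s False]) (simp add: diff_divide_distrib)
      finally show ?thesis
        by (simp add: h_def trans_op_le_const)
    qed
    finally show ?thesis .
  qed
  obtain x where x: "scale_up x > scale_fn t"
    using order_tendstoD(1)[OF lim \<open>scale_fn t < L\<close>] by (auto simp: eventually_sequentially)
  have v: "(x + 1, 1) \<in> crw_states" by (simp add: crw_states_def dirs_def)
  have "hit_prob t (x + 1, 1) \<le> h (x + 1, 1)"
    using h_nonneg h_super v by (rule hit_prob_le_supersolution)
  moreover have "h (x + 1, 1) < 1"
    using x D by (simp add: h_def scale_fn_def D_def divide_less_eq)
  ultimately show False using hit_prob_eq_1_everywhere[OF t recurrent v] by simp
qed

lemma ratio_prod_Suc_div: "ratio_prod (Suc x) / ratio_prod x = qq 1 1 (Suc x) / qq (-1) (-1) (Suc x)"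
  using ratio_prod_pos[of x] by simp

declare ratio_prod.simps(2) [simp del]

text \<open>The mean time to reach \<open>(0, -1)\<close> is \<open>time_fn\<close>: from \<open>(x, -1)\<close> it is
  \<open>time_dn x\<close>, and from \<open>(x + 1, 1)\<close> the walk first needs an extra \<open>up_excess x\<close> to
  return to level \<open>x\<close>.\<close>
definition up_excess :: "nat \<Rightarrow> real" where
  "up_excess x = (\<Sum>n. ratio_prod (n + x) + ratio_prod (n + x + 1)) / ratio_prod x"

definition dn_incr :: "nat \<Rightarrow> real" where
  "dn_incr x = (1 + qq (-1) 1 (x + 1) * up_excess (x + 1)) / qq (-1) (-1) (x + 1)"

definition time_dn :: "nat \<Rightarrow> real" where
  "time_dn x = (\<Sum>y<x. dn_incr y)"

definition time_fn :: "cstate \<Rightarrow> real" where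
  "time_fn s = (if snd s = -1 then time_dn (fst s) else up_excess (fst s - 1) + time_dn (fst s - 1))"

context
  assumes summable: "summable ratio_prod"
begin

lemma summable_up_excess_terms: "summable (\<lambda>n. ratio_prod (n + x) + ratio_prod (n + x + 1))"
  using summable_ignore_initial_segment[OF summable, of x]
    summable_ignore_initial_segment[OF summable, of "x + 1"]
  by (simp add: summable_add add.assoc)

lemma up_excess_nonneg: "up_excess x \<ge> 0"
  unfolding up_excess_def using summable_up_excess_terms ratio_prod_pos
  by (intro divide_nonneg_nonneg suminf_nonneg) (auto intro: add_nonneg_nonneg less_imp_le)

lemma up_excess_rec:
  "up_excess x = 1 + qq 1 1 (x + 1) / qq (-1) (-1) (x + 1) * (1 + up_excess (x + 1))"
proof -
  have pos: "ratio_prod x > 0" "ratio_prod (x + 1) > 0" using ratio_prod_pos by auto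
  have "(\<Sum>n. ratio_prod (n + x) + ratio_prod (n + x + 1))
      = ratio_prod x + ratio_prod (x + 1) + (\<Sum>n. ratio_prod (n + (x + 1)) + ratio_prod (n + (x + 1) + 1))"
    using suminf_split_head[OF summable_up_excess_terms[of x]] by (simp add: algebra_simps)
  then have "up_excess x = 1 + ratio_prod (x + 1) / ratio_prod x * (1 + up_excess (x + 1))"
    using pos by (simp add: up_excess_def field_simps)
  then show ?thesis using ratio_prod_Suc_div[of x] by simp
qed

lemma dn_incr_nonneg: "dn_incr x \<ge> 0"
  unfolding dn_incr_def using up_excess_nonneg qq_dn_up_nonneg qq_dn_dn_pos[of "x + 1"]
  by (simp add: add_nonneg_nonneg)

lemma time_fn_nonneg: "time_fn s \<ge> 0"
  using up_excess_nonneg dn_incr_nonneg by (simp add: time_fn_def time_dn_def sum_nonneg)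

lemma time_fn_drift:
  assumes "s \<in> crw_states" "s \<noteq> (0, -1)"
  shows "1 + trans_op time_fn s = time_fn s"
proof -
  obtain y i where s: "s = (Suc y, i)" and "i = 1 \<or> i = -1"
    using assms by (cases s; cases "fst s") (auto simp: crw_states_def dirs_def)
  have pos: "qq 1 1 (Suc y) > 0" "qq (-1) (-1) (Suc y) > 0"
    using qq_up_up_pos qq_dn_dn_pos by auto
  consider "i = 1" | "i = -1" using \<open>i = 1 \<or> i = -1\<close> by blast
  then show ?thesis
  proof cases
    case 1
    have "trans_op time_fn s
        = qq 1 1 (Suc y) * (up_excess (Suc y) + dn_incr y) + time_dn y"
      by (simp add: s 1 trans_op_def p_up_def p_dn_def up_def dn_def time_fn_def time_dn_def
          dirs_def qq_up_dn_eq algebra_simps)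
    also have "qq 1 1 (Suc y) * (up_excess (Suc y) + dn_incr y)
        = qq 1 1 (Suc y) / qq (-1) (-1) (Suc y) * (1 + up_excess (Suc y))"
      using pos by (simp add: dn_incr_def qq_dn_up_eq field_simps)
    finally show ?thesis using up_excess_rec[of y] by (simp add: s 1 time_fn_def[of "(Suc y, 1)"])
  next
    case 2
    have "trans_op time_fn s = qq (-1) 1 (Suc y) * (up_excess (Suc y) + dn_incr y) + time_dn y"
      by (simp add: s 2 trans_op_def p_up_def p_dn_def up_def dn_def time_fn_def time_dn_def
          dirs_def qq_dn_up_eq algebra_simps)
    moreover have "1 + qq (-1) 1 (Suc y) * (up_excess (Suc y) + dn_incr y) = dn_incr y"
      using pos by (simp add: dn_incr_def qq_dn_up_eq field_simps)
    ultimately show ?thesis by (simp add: s 2 time_fn_def[of "(Suc y, -1)"] time_dn_def)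
  qed
qed

lemma pos_recurrent_if_summable_ratio_prod:
  assumes t: "t \<in> crw_states"
  shows "summable (\<lambda>n. real n * first_pass P n t t)"
proof -
  have B: "t \<in> {t, (0, -1)}" "finite {t, (0, -1)}" "{t, (0, -1)} \<subseteq> crw_states"
    using t by (auto simp: crw_states_def dirs_def)
  have "1 + trans_op time_fn s \<le> time_fn s" if "s \<in> crw_states" "s \<notin> {t, (0, -1)}" for s
    using time_fn_drift that by simp
  then have "\<exists>K. \<forall>k. hit_time_trunc t k t \<le> K"
    by (rule foster_criterion[OF B time_fn_nonneg])
  then show ?thesis using summable_return_time_if_bounded by blast
qed

end

text \<open>Truncated analogues of \<open>up_excess\<close> and \<open>time_fn\<close>: only levels below \<open>R\<close> count, and
  \<open>time_fn_trunc z R\<close> vanishes on the levels up to \<open>z\<close>.  They are subsolutions of the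
  mean-time equation, so they bound hitting times from below.\<close>
definition up_excess_trunc :: "nat \<Rightarrow> nat \<Rightarrow> real" where
  "up_excess_trunc R x = (\<Sum>y\<in>{x..<R}. ratio_prod y + ratio_prod (y + 1)) / ratio_prod x"

definition dn_incr_trunc :: "nat \<Rightarrow> nat \<Rightarrow> real" where
  "dn_incr_trunc R y =
    (if y < R then (1 + qq (-1) 1 (y + 1) * up_excess_trunc R (y + 1)) / qq (-1) (-1) (y + 1) else 0)"

definition time_dn_trunc :: "nat \<Rightarrow> nat \<Rightarrow> nat \<Rightarrow> real" where
  "time_dn_trunc z R x = (\<Sum>y\<in>{z..<x}. dn_incr_trunc R y)"

definition time_fn_trunc :: "nat \<Rightarrow> nat \<Rightarrow> cstate \<Rightarrow> real" where
  "time_fn_trunc z R s =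
    (if snd s = -1 then time_dn_trunc z R (fst s)
     else if fst s \<le> z then 0
     else up_excess_trunc R (fst s - 1) + time_dn_trunc z R (fst s - 1))"

lemma up_excess_trunc_nonneg: "up_excess_trunc R x \<ge> 0"
  unfolding up_excess_trunc_def using ratio_prod_pos
  by (intro divide_nonneg_nonneg sum_nonneg add_nonneg_nonneg) (auto intro: less_imp_le)

lemma up_excess_trunc_beyond: "x \<ge> R \<Longrightarrow> up_excess_trunc R x = 0"
  by (simp add: up_excess_trunc_def)

lemma up_excess_trunc_rec:
  assumes "x < R"
  shows "up_excess_trunc R x
    = 1 + qq 1 1 (x + 1) / qq (-1) (-1) (x + 1) * (1 + up_excess_trunc R (x + 1))"
proof -
  have pos: "ratio_prod x > 0" "ratio_prod (x + 1) > 0" using ratio_prod_pos by auto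
  have "(\<Sum>y\<in>{x..<R}. ratio_prod y + ratio_prod (y + 1))
      = ratio_prod x + ratio_prod (x + 1) + (\<Sum>y\<in>{Suc x..<R}. ratio_prod y + ratio_prod (y + 1))"
    using assms by (subst sum.atLeast_Suc_lessThan) auto
  then have "up_excess_trunc R x = 1 + ratio_prod (x + 1) / ratio_prod x * (1 + up_excess_trunc R (x + 1))"
    using pos by (simp add: up_excess_trunc_def field_simps)
  then show ?thesis using ratio_prod_Suc_div[of x] by simp
qed

lemma up_excess_trunc_unbounded:
  assumes "\<not> summable ratio_prod"
  shows "\<exists>R. up_excess_trunc R z > K"
proof -
  have "\<exists>n. (\<Sum>i<n. ratio_prod i) > K * ratio_prod z + (\<Sum>i<z. ratio_prod i)"
    using assms ratio_prod_pos
    by (metis less_imp_le not_le summableI_nonneg_bounded)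
  then obtain n where n: "(\<Sum>i<n. ratio_prod i) > K * ratio_prod z + (\<Sum>i<z. ratio_prod i)" ..
  consider "n \<le> z" | "z \<le> n" by linarith
  then have "(\<Sum>i\<in>{z..<n}. ratio_prod i) > K * ratio_prod z"
  proof cases
    case 1
    then have "(\<Sum>i<n. ratio_prod i) \<le> (\<Sum>i<z. ratio_prod i)" "{z..<n} = {}"
      using ratio_prod_pos by (auto intro: sum_mono2 less_imp_le)
    then show ?thesis using n by simp
  next
    case 2
    then have "(\<Sum>i<n. ratio_prod i) = (\<Sum>i<z. ratio_prod i) + (\<Sum>i\<in>{z..<n}. ratio_prod i)"
      by (metis atLeast0LessThan sum.atLeastLessThan_concat zero_le)
    then show ?thesis using n by simp
  qed
  also have "(\<Sum>i\<in>{z..<n}. ratio_prod i) \<le> (\<Sum>y\<in>{z..<n}. ratio_prod y + ratio_prod (y + 1))"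
    using ratio_prod_pos by (intro sum_mono) (auto intro: less_imp_le)
  finally have "up_excess_trunc n z > K"
    using ratio_prod_pos[of z] by (simp add: up_excess_trunc_def less_divide_eq)
  then show ?thesis ..
qed

lemma dn_incr_trunc_nonneg: "dn_incr_trunc R y \<ge> 0"
  unfolding dn_incr_trunc_def using up_excess_trunc_nonneg qq_dn_up_nonneg qq_dn_dn_pos[of "y + 1"]
  by (simp add: add_nonneg_nonneg)

lemma time_fn_trunc_nonneg: "time_fn_trunc z R s \<ge> 0"
  using up_excess_trunc_nonneg dn_incr_trunc_nonneg
  by (simp add: time_fn_trunc_def time_dn_trunc_def sum_nonneg)

lemma time_dn_trunc_Suc: "x \<ge> z \<Longrightarrow> time_dn_trunc z R (Suc x) = time_dn_trunc z R x + dn_incr_trunc R x"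
  by (simp add: time_dn_trunc_def)

lemma time_fn_trunc_subsolution:
  assumes "s \<in> crw_states"
  shows "time_fn_trunc z R s \<le> 1 + trans_op (time_fn_trunc z R) s"
proof (cases "fst s \<le> z")
  case True
  then have "time_fn_trunc z R s = 0" by (simp add: time_fn_trunc_def time_dn_trunc_def)
  then show ?thesis using time_fn_trunc_nonneg by (simp add: trans_op_nonneg)
next
  case False
  obtain y i where s: "s = (Suc y, i)" and "i = 1 \<or> i = -1" and "y \<ge> z"
    using assms False by (cases s; cases "fst s") (auto simp: crw_states_def dirs_def)
  have pos: "qq 1 1 (Suc y) > 0" "qq (-1) (-1) (Suc y) > 0"
    using qq_up_up_pos qq_dn_dn_pos by auto
  have nonneg: "0 \<le> up_excess_trunc R (Suc y)" "0 \<le> dn_incr_trunc R y"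
    by (simp_all add: up_excess_trunc_nonneg dn_incr_trunc_nonneg)
  consider "i = 1" | "i = -1" using \<open>i = 1 \<or> i = -1\<close> by blast
  then show ?thesis
  proof cases
    case 1
    have "trans_op (time_fn_trunc z R) s
        = qq 1 1 (Suc y) * (up_excess_trunc R (Suc y) + dn_incr_trunc R y) + time_dn_trunc z R y"
      using \<open>y \<ge> z\<close>
      by (simp add: s 1 trans_op_def p_up_def p_dn_def up_def dn_def time_fn_trunc_def
          time_dn_trunc_Suc dirs_def qq_up_dn_eq algebra_simps)
    moreover have "up_excess_trunc R y
        \<le> 1 + qq 1 1 (Suc y) * (up_excess_trunc R (Suc y) + dn_incr_trunc R y)"
    proof (cases "y < R")
      case True
      have "qq 1 1 (Suc y) * (up_excess_trunc R (Suc y) + dn_incr_trunc R y)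
          = qq 1 1 (Suc y) / qq (-1) (-1) (Suc y) * (1 + up_excess_trunc R (Suc y))"
        using pos True by (simp add: dn_incr_trunc_def qq_dn_up_eq field_simps)
      then show ?thesis using up_excess_trunc_rec[OF True] by simp
    qed (use pos nonneg up_excess_trunc_beyond in simp)
    ultimately show ?thesis using \<open>y \<ge> z\<close> by (simp add: s 1 time_fn_trunc_def[of z R "(Suc y, 1)"])
  next
    case 2
    have "trans_op (time_fn_trunc z R) s
        = qq (-1) 1 (Suc y) * (up_excess_trunc R (Suc y) + dn_incr_trunc R y) + time_dn_trunc z R y"
      using \<open>y \<ge> z\<close>
      by (simp add: s 2 trans_op_def p_up_def p_dn_def up_def dn_def time_fn_trunc_def
          time_dn_trunc_Suc dirs_def qq_dn_up_eq algebra_simps)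
    moreover have "dn_incr_trunc R y
        \<le> 1 + qq (-1) 1 (Suc y) * (up_excess_trunc R (Suc y) + dn_incr_trunc R y)"
    proof (cases "y < R")
      case True
      have "qq (-1) (-1) (Suc y) * dn_incr_trunc R y = 1 + qq (-1) 1 (Suc y) * up_excess_trunc R (Suc y)"
        using pos True by (simp add: dn_incr_trunc_def)
      then show ?thesis by (simp add: qq_dn_up_eq algebra_simps)
    qed (use qq_dn_up_nonneg[of "Suc y"] nonneg in \<open>simp add: dn_incr_trunc_def\<close>)
    ultimately show ?thesis
      using \<open>y \<ge> z\<close> by (simp add: s 2 time_fn_trunc_def[of z R "(Suc y, -1)"] time_dn_trunc_Suc)
  qed
qed

lemma time_fn_trunc_bounded:
  "time_fn_trunc z R s \<le> (\<Sum>y<R. dn_incr_trunc R y) + (\<Sum>x<R. up_excess_trunc R x)"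
proof -
  have dn: "time_dn_trunc z R x \<le> (\<Sum>y<R. dn_incr_trunc R y)" for x
  proof -
    have "time_dn_trunc z R x = (\<Sum>y\<in>{z..<x} \<inter> {..<R}. dn_incr_trunc R y)"
      unfolding time_dn_trunc_def by (intro sum.mono_neutral_right) (auto simp: dn_incr_trunc_def)
    also have "\<dots> \<le> (\<Sum>y<R. dn_incr_trunc R y)"
      using dn_incr_trunc_nonneg by (intro sum_mono2) auto
    finally show ?thesis .
  qed
  have up: "up_excess_trunc R x \<le> (\<Sum>x<R. up_excess_trunc R x)" for x
    using up_excess_trunc_nonneg up_excess_trunc_beyond[of R x]
    by (cases "x < R") (auto intro: member_le_sum sum_nonneg)
  show ?thesis
    using dn up sum_nonneg[of "{..<R}" "dn_incr_trunc R"] sum_nonneg[of "{..<R}" "up_excess_trunc R"]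
      dn_incr_trunc_nonneg up_excess_trunc_nonneg
    by (smt (verit) time_fn_trunc_def)
qed

text \<open>If the mean return time to \<open>t = (z, i)\<close> were finite, so would be the mean hitting
  time of \<open>t\<close> from \<open>(z + 1, 1)\<close>, which dominates every \<open>up_excess_trunc R z\<close>.\<close>
lemma null_if_not_summable_ratio_prod:
  assumes not_summable: "\<not> summable ratio_prod" and t: "t \<in> crw_states"
    and recurrent: "hit_prob t t = 1"
  shows "\<not> summable (\<lambda>n. real n * first_pass P n t t)"
proof
  assume summable: "summable (\<lambda>n. real n * first_pass P n t t)"
  obtain z i where tz: "t = (z, i)" and i: "i \<in> dirs"
    using t by (cases t) (auto simp: crw_states_def)
  define u where "u = (z + 1, 1 :: int)"
  have u: "u \<in> crw_states" by (simp add: u_def crw_states_def dirs_def)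
  define K where "K = 2 * (\<Sum>n. real n * first_pass P n t t)"
  obtain m p where p: "p > 0" "\<And>k. p * hit_time_trunc t k u \<le> hit_time_trunc t (k + m) t"
    using hit_time_trunc_transfer[OF t u] by blast
  have u_bound: "hit_time_trunc t k u \<le> K / p" for k
    using p(2)[of k] hit_time_trunc_le_return_time[OF summable recurrent, of "k + m"] p(1)
    by (simp add: K_def field_simps)
  have avoid_lim: "(\<lambda>k. avoid_by t k u) \<longlonglongrightarrow> 0"
    using avoid_by_tendsto[of t u] hit_prob_eq_1_everywhere[OF t recurrent u]
    by (simp add: avoid_prob_def)
  have "up_excess_trunc R z \<le> K / p" for R
  proof -
    define Y where "Y = time_fn_trunc z R"
    define Bd where "Bd = (\<Sum>y<R. dn_incr_trunc R y) + (\<Sum>x<R. up_excess_trunc R x)"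
    have "Y t = 0" using i by (auto simp: Y_def time_fn_trunc_def tz dirs_def time_dn_trunc_def)
    then have "Y(t := 0) = Y" by auto
    then have Y_sub: "Y s \<le> 1 + killed_op t Y s" if "s \<in> crw_states" for s
      using time_fn_trunc_subsolution[OF that, of z R] unfolding killed_op_def Y_def by simp
    have "Y u - Bd * avoid_by t k u \<le> K / p" for k
      using hit_time_trunc_ge_subsolution[OF Y_sub _ u, of Bd k] time_fn_trunc_bounded u_bound[of k]
      by (simp add: Y_def Bd_def)
    then have "Y u - Bd * 0 \<le> K / p"
      by (intro LIMSEQ_le_const2[OF tendsto_diff[OF tendsto_const tendsto_mult[OF tendsto_const avoid_lim]]])
        auto
    moreover have "Y u = up_excess_trunc R z" by (simp add: Y_def time_fn_trunc_def u_def time_dn_trunc_def)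
    ultimately show ?thesis by simp
  qed
  then show False using up_excess_trunc_unbounded[OF not_summable, where z = z and K = "K / p"] by (meson not_le)
qed

end

section \<open>Asymptotics of the persistence ratios\<close>

lemma ln_diff_pred_approx:
  fixes Y :: real
  assumes "Y \<ge> 2"
  shows "\<bar>(ln Y - ln (Y - 1)) - 1 / Y\<bar> \<le> 2 / Y\<^sup>2"
proof -
  have "1 + (- 1 / Y) = (Y - 1) / Y" using assms by (simp add: field_simps)
  then have "ln Y - ln (Y - 1) = - ln (1 + (- 1 / Y))" using assms by (simp add: ln_div)
  moreover have "\<bar>ln (1 + (- 1 / Y)) - (- 1 / Y)\<bar> \<le> 2 * (- 1 / Y)\<^sup>2"
    using assms by (intro abs_ln_one_plus_x_minus_x_bound) (simp add: field_simps)
  ultimately show ?thesis by (simp add: power2_eq_square field_simps abs_minus_commute)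
qed

lemma ln_one_plus_vs_ln_diff:
  fixes z a Y A B P :: real
  assumes z: "\<bar>z\<bar> \<le> 1 / 2" and Y: "Y \<ge> 2" and P: "1 / Y\<^sup>2 \<le> P"
    and lin: "\<bar>z - a / Y\<bar> \<le> A * P" and sq: "z\<^sup>2 \<le> B * P"
  shows "\<bar>ln (1 + z) - a * (ln Y - ln (Y - 1))\<bar> \<le> (2 * B + A + 2 * \<bar>a\<bar>) * P"
proof -
  have "\<bar>ln (1 + z) - z\<bar> \<le> 2 * z\<^sup>2"
    using abs_ln_one_plus_x_minus_x_bound[of z] z by simp
  moreover have "\<bar>a * ((ln Y - ln (Y - 1)) - 1 / Y)\<bar> \<le> \<bar>a\<bar> * (2 * P)"
    using ln_diff_pred_approx[OF Y] P by (simp add: abs_mult mult_left_mono)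
  moreover have "ln (1 + z) - a * (ln Y - ln (Y - 1))
      = (ln (1 + z) - z) + (z - a / Y) - a * ((ln Y - ln (Y - 1)) - 1 / Y)"
    by (simp add: algebra_simps)
  ultimately show ?thesis using lin sq by (simp add: abs_le_iff algebra_simps)
qed

text \<open>Here \<open>pp\<close> and \<open>mm\<close> stand for the persistence probabilities \<open>q\<^sub>+\<^sub>+\<close> and \<open>q\<^sub>-\<^sub>-\<close> at
  position \<open>Y\<close>, with errors \<open>e1\<close>, \<open>e2\<close> of order \<open>P\<close>.\<close>
lemma persistence_ratio_approx:
  fixes Y P q a cm e1 e2 K0 pp mm :: real
  assumes Y: "Y \<ge> 2" and q: "q > 0" and P: "0 \<le> P" "P \<le> 1" "1 / Y\<^sup>2 \<le> P"
    and e: "\<bar>e1\<bar> \<le> K0 * P" "\<bar>e2\<bar> \<le> K0 * P" and K0: "K0 \<ge> 0"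
    and diff: "pp - mm = a * q / Y + e1 - e2" and dn: "mm - q = - cm / (2 * Y) + e2"
    and mm: "mm \<ge> q / 2"
  shows "\<bar>(pp / mm - 1) - a / Y\<bar> \<le> (2 / q) * (\<bar>a\<bar> * \<bar>cm\<bar> / 2 + \<bar>a\<bar> * K0 + 2 * K0) * P"
    and "\<bar>pp / mm - 1\<bar> \<le> 2 * \<bar>a\<bar> / Y + 4 * K0 * P / q"
proof -
  have mm_pos: "mm > 0" using mm q by linarith
  have Y_pos: "Y > 0" using Y by simp
  have P_Y: "P / Y \<le> P" using P Y mult_left_mono[of 1 Y P] by (simp add: divide_le_eq)
  have "\<bar>a * (q - mm) / Y\<bar> \<le> \<bar>a\<bar> * (\<bar>cm\<bar> / (2 * Y) + K0 * P) / Y"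
  proof -
    have "\<bar>cm / (2 * Y)\<bar> = \<bar>cm\<bar> / (2 * Y)" using Y_pos by (simp add: abs_divide)
    then have "\<bar>q - mm\<bar> \<le> \<bar>cm\<bar> / (2 * Y) + K0 * P"
      using dn e(2) by (simp only: abs_le_iff) linarith
    then show ?thesis using Y_pos by (simp add: abs_mult abs_divide divide_right_mono mult_left_mono)
  qed
  also have "\<dots> = \<bar>a\<bar> * \<bar>cm\<bar> / 2 * (1 / Y\<^sup>2) + \<bar>a\<bar> * K0 * (P / Y)"
    using Y_pos by (simp add: field_simps power2_eq_square)
  also have "\<dots> \<le> \<bar>a\<bar> * \<bar>cm\<bar> / 2 * P + \<bar>a\<bar> * K0 * P"
    using P P_Y K0 by (intro add_mono mult_left_mono) auto
  finally have "\<bar>a * (q - mm) / Y + e1 - e2\<bar> \<le> (\<bar>a\<bar> * \<bar>cm\<bar> / 2 + \<bar>a\<bar> * K0 + 2 * K0) * P"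
    using e abs_triangle_ineq4[of "a * (q - mm) / Y + e1" e2] abs_triangle_ineq[of "a * (q - mm) / Y" e1]
    by (simp add: algebra_simps)
  moreover have "(pp / mm - 1) - a / Y = (a * (q - mm) / Y + e1 - e2) / mm"
    using mm_pos Y_pos diff by (simp add: field_simps)
  ultimately have "\<bar>(pp / mm - 1) - a / Y\<bar> \<le> (\<bar>a\<bar> * \<bar>cm\<bar> / 2 + \<bar>a\<bar> * K0 + 2 * K0) * P / mm"
    using mm_pos by (simp add: abs_divide divide_right_mono)
  also have "\<dots> \<le> (\<bar>a\<bar> * \<bar>cm\<bar> / 2 + \<bar>a\<bar> * K0 + 2 * K0) * P / (q / 2)"
    using mm q P K0 by (intro divide_left_mono mult_nonneg_nonneg) auto
  also have "\<dots> = (2 / q) * (\<bar>a\<bar> * \<bar>cm\<bar> / 2 + \<bar>a\<bar> * K0 + 2 * K0) * P"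
    by simp
  finally show "\<bar>(pp / mm - 1) - a / Y\<bar> \<le> (2 / q) * (\<bar>a\<bar> * \<bar>cm\<bar> / 2 + \<bar>a\<bar> * K0 + 2 * K0) * P" .
  have "\<bar>a * q / Y\<bar> = \<bar>a\<bar> * q / Y" using q Y_pos by (simp add: abs_mult abs_divide)
  then have "\<bar>pp - mm\<bar> \<le> \<bar>a\<bar> * q / Y + 2 * K0 * P"
    using diff e abs_ge_self[of "a * q / Y"] abs_ge_minus_self[of "a * q / Y"]
    by (simp only: abs_le_iff) linarith
  moreover have "pp / mm - 1 = (pp - mm) / mm" using mm_pos by (simp add: field_simps)
  ultimately have "\<bar>pp / mm - 1\<bar> \<le> (\<bar>a\<bar> * q / Y + 2 * K0 * P) / mm"
    using mm_pos by (simp add: abs_divide divide_right_mono)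
  also have "\<dots> \<le> (\<bar>a\<bar> * q / Y + 2 * K0 * P) / (q / 2)"
    using mm q P K0 Y_pos by (intro divide_left_mono add_nonneg_nonneg mult_nonneg_nonneg) auto
  also have "\<dots> = 2 * \<bar>a\<bar> / Y + 4 * K0 * P / q" using q by (simp add: field_simps)
  finally show "\<bar>pp / mm - 1\<bar> \<le> 2 * \<bar>a\<bar> / Y + 4 * K0 * P / q" .
qed

lemma square_le_from_abs_bound:
  fixes z a Y K0 P q :: real
  assumes z: "\<bar>z\<bar> \<le> 2 * \<bar>a\<bar> / Y + 4 * K0 * P / q"
    and P: "0 \<le> P" "P \<le> 1" "1 / Y\<^sup>2 \<le> P"
  shows "z\<^sup>2 \<le> (8 * a\<^sup>2 + 32 * K0\<^sup>2 / q\<^sup>2) * P"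
proof -
  have "z\<^sup>2 \<le> (2 * \<bar>a\<bar> / Y + 4 * K0 * P / q)\<^sup>2"
    using z by (metis abs_ge_zero power2_abs power_mono)
  also have "\<dots> \<le> 2 * ((2 * \<bar>a\<bar> / Y)\<^sup>2 + (4 * K0 * P / q)\<^sup>2)"
  proof -
    have "(x + y)\<^sup>2 \<le> 2 * (x\<^sup>2 + y\<^sup>2)" for x y :: real
      using zero_le_power2[of "x - y"] by (simp add: power2_eq_square algebra_simps)
    then show ?thesis .
  qed
  also have "\<dots> = 8 * a\<^sup>2 * (1 / Y\<^sup>2) + 32 * K0\<^sup>2 / q\<^sup>2 * (P * P)"
    by (simp add: power2_eq_square field_simps)
  also have "\<dots> \<le> 8 * a\<^sup>2 * P + 32 * K0\<^sup>2 / q\<^sup>2 * P"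
    using P by (intro add_mono mult_left_mono) (auto simp: mult_left_le)
  finally show ?thesis
    by (simp add: algebra_simps)
qed

locale crw = crw_chain qq for qq :: "int \<Rightarrow> int \<Rightarrow> nat \<Rightarrow> real" +
  fixes q \<delta> :: real and c :: "int \<Rightarrow> real"
  assumes q_bounds: "0 < q" "q < 1"
    and delta_pos: "\<delta> > 0"
    and asym_same: "\<And>i. i \<in> dirs \<Longrightarrow>
       (\<lambda>x::nat. qq i i x - (q + of_int i * c i / (2 * real x))) \<in> O(\<lambda>x. real x powr (-1 - \<delta>))"
begin

definition alpha :: real where "alpha = (c 1 + c (-1)) / (2 * q)"

text \<open>The error exponent is capped at \<open>1\<close> so that the \<open>O(y\<^sup>-\<^sup>2)\<close> terms are
  \<open>O(y powr (-1 - \<delta>'))\<close> as well.\<close>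
definition \<delta>' :: real where "\<delta>' = min \<delta> 1"

lemma \<delta>'_bounds: "\<delta>' > 0" "\<delta>' \<le> 1" "\<delta>' \<le> \<delta>"
  using delta_pos by (auto simp: \<delta>'_def)

lemma powr_error_bounds:
  assumes "Y \<ge> 2"
  shows "Y powr (-1 - \<delta>') \<le> 1" "1 / Y\<^sup>2 \<le> Y powr (-1 - \<delta>')"
    "Y powr (-1 - \<delta>) \<le> Y powr (-1 - \<delta>')"
proof -
  show "Y powr (-1 - \<delta>') \<le> 1"
    using powr_mono[of "-1 - \<delta>'" 0 Y] assms \<delta>'_bounds by simp
  have "Y powr (-2) \<le> Y powr (-1 - \<delta>')"
    using powr_mono[of "-2" "-1 - \<delta>'" Y] assms \<delta>'_bounds by simp
  then show "1 / Y\<^sup>2 \<le> Y powr (-1 - \<delta>')"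
    using assms by (simp add: powr_minus powr_realpow divide_inverse)
  show "Y powr (-1 - \<delta>) \<le> Y powr (-1 - \<delta>')"
    using powr_mono[of "-1 - \<delta>" "-1 - \<delta>'" Y] assms \<delta>'_bounds by simp
qed

lemma persistence_error_bound:
  assumes "i \<in> dirs"
  shows "\<exists>K\<ge>0. eventually (\<lambda>y. \<bar>qq i i y - (q + of_int i * c i / (2 * real y))\<bar>
    \<le> K * real y powr (-1 - \<delta>)) sequentially"
proof -
  obtain K where "K > 0" and "eventually (\<lambda>y. norm (qq i i y - (q + of_int i * c i / (2 * real y)))
      \<le> K * norm (real y powr (-1 - \<delta>))) at_top"
    using asym_same[OF assms] by (elim landau_o.bigE)
  then show ?thesis by (intro exI[of _ K]) (auto elim: eventually_mono)
qed

lemma persistence_tendsto: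
  assumes "i \<in> dirs"
  shows "(\<lambda>y. qq i i y) \<longlonglongrightarrow> q"
proof -
  obtain K where "K \<ge> 0" and ev: "eventually (\<lambda>y. \<bar>qq i i y - (q + of_int i * c i / (2 * real y))\<bar>
      \<le> K * real y powr (-1 - \<delta>)) sequentially"
    using persistence_error_bound[OF assms] by blast
  have "(\<lambda>y. K * real y powr (-1 - \<delta>)) \<longlonglongrightarrow> K * 0"
    using delta_pos by (intro tendsto_intros tendsto_neg_powr filterlim_real_sequentially) auto
  then have "(\<lambda>y. K * real y powr (-1 - \<delta>)) \<longlonglongrightarrow> 0" by simp
  then have err: "(\<lambda>y. qq i i y - (q + of_int i * c i / (2 * real y))) \<longlonglongrightarrow> 0"
    using ev by (intro Lim_null_comparison[OF _ \<open>_ \<longlonglongrightarrow> 0\<close>]) simp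
  have "(\<lambda>y. q + (of_int i * c i / 2) * (1 / real y)) \<longlonglongrightarrow> q + (of_int i * c i / 2) * 0"
    by (intro tendsto_intros lim_const_over_n)
  from tendsto_add[OF err this] show ?thesis by simp
qed

lemma eventually_qq_dn_dn_bounds:
  "eventually (\<lambda>y. q / 2 \<le> qq (-1) (-1) y \<and> qq (-1) (-1) y \<le> (1 + q) / 2) sequentially"
proof -
  have lim: "(\<lambda>y. qq (-1) (-1) y) \<longlonglongrightarrow> q"
    by (rule persistence_tendsto) (simp add: dirs_def)
  show ?thesis
    using order_tendstoD(1)[OF lim, of "q / 2"] order_tendstoD(2)[OF lim, of "(1 + q) / 2"] q_bounds
    by (auto elim: eventually_elim2)
qed

lemma log_ratio_bound:
  "\<exists>K Y0. K \<ge> 0 \<and> Y0 \<ge> 2 \<and> (\<forall>y\<ge>Y0.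
     \<bar>ln (qq 1 1 y / qq (-1) (-1) y) - alpha * (ln (real y) - ln (real y - 1))\<bar>
       \<le> K * real y powr (-1 - \<delta>'))"
proof -
  obtain K1 where K1: "K1 \<ge> 0" and ev1: "eventually (\<lambda>y. \<bar>qq 1 1 y - (q + c 1 / (2 * real y))\<bar>
      \<le> K1 * real y powr (-1 - \<delta>)) sequentially"
    using persistence_error_bound[of 1] by (auto simp: dirs_def)
  obtain K2 where K2: "K2 \<ge> 0" and ev2: "eventually (\<lambda>y. \<bar>qq (-1) (-1) y - (q - c (-1) / (2 * real y))\<bar>
      \<le> K2 * real y powr (-1 - \<delta>)) sequentially"
    using persistence_error_bound[of "-1"] by (auto simp: dirs_def)
  define K0 where "K0 = K1 + K2"
  define P where "P y = real y powr (-1 - \<delta>')" for y :: nat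
  define cm where "cm = c (-1)"
  have K0: "K0 \<ge> 0" using K1 K2 by (simp add: K0_def)
  have P_lim: "P \<longlonglongrightarrow> 0"
    unfolding P_def using \<delta>'_bounds by (intro tendsto_neg_powr filterlim_real_sequentially) auto
  have small: "eventually (\<lambda>y. 2 * \<bar>alpha\<bar> * (1 / real y) + 4 * K0 / q * P y < 1 / 2
      \<and> K0 * P y < q / 8 \<and> \<bar>cm\<bar> / 2 * (1 / real y) < q / 8) sequentially"
  proof -
    have "(\<lambda>y. 2 * \<bar>alpha\<bar> * (1 / real y) + 4 * K0 / q * P y) \<longlonglongrightarrow> 2 * \<bar>alpha\<bar> * 0 + 4 * K0 / q * 0"
      "(\<lambda>y. K0 * P y) \<longlonglongrightarrow> K0 * 0" "(\<lambda>y. \<bar>cm\<bar> / 2 * (1 / real y)) \<longlonglongrightarrow> \<bar>cm\<bar> / 2 * 0"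
      by (intro tendsto_intros P_lim lim_const_over_n)+
    then have lims: "(\<lambda>y. 2 * \<bar>alpha\<bar> * (1 / real y) + 4 * K0 / q * P y) \<longlonglongrightarrow> 0"
      "(\<lambda>y. K0 * P y) \<longlonglongrightarrow> 0" "(\<lambda>y. \<bar>cm\<bar> / 2 * (1 / real y)) \<longlonglongrightarrow> 0"
      by (simp_all only: mult_zero_right add_0)
    show ?thesis
      using q_bounds by (intro eventually_conj order_tendstoD(2)[OF lims(1)]
          order_tendstoD(2)[OF lims(2)] order_tendstoD(2)[OF lims(3)]) simp_all
  qed
  obtain N where N: "\<And>y. y \<ge> N \<Longrightarrow> y \<ge> 2
      \<and> (2 * \<bar>alpha\<bar> * (1 / real y) + 4 * K0 / q * P y < 1 / 2
         \<and> K0 * P y < q / 8 \<and> \<bar>cm\<bar> / 2 * (1 / real y) < q / 8)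
      \<and> \<bar>qq 1 1 y - (q + c 1 / (2 * real y))\<bar> \<le> K1 * real y powr (-1 - \<delta>)
      \<and> \<bar>qq (-1) (-1) y - (q - c (-1) / (2 * real y))\<bar> \<le> K2 * real y powr (-1 - \<delta>)"
    using eventually_conj[OF eventually_ge_at_top[of "2::nat"] eventually_conj[OF small
        eventually_conj[OF ev1 ev2]]]
    unfolding eventually_sequentially by blast
  define A where "A = (2 / q) * (\<bar>alpha\<bar> * \<bar>cm\<bar> / 2 + \<bar>alpha\<bar> * K0 + 2 * K0)"
  define B where "B = 8 * alpha\<^sup>2 + 32 * K0\<^sup>2 / q\<^sup>2"
  have "\<bar>ln (qq 1 1 y / qq (-1) (-1) y) - alpha * (ln (real y) - ln (real y - 1))\<bar>
      \<le> (2 * B + A + 2 * \<bar>alpha\<bar>) * P y" if y: "y \<ge> N" for y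
  proof -
    define Y where "Y = real y"
    have Y: "Y \<ge> 2" "Y > 0" using N[OF y] by (auto simp: Y_def)
    have P: "0 \<le> P y" "P y \<le> 1" "1 / Y\<^sup>2 \<le> P y" "real y powr (-1 - \<delta>) \<le> P y"
      using powr_error_bounds[of "real y"] Y by (simp_all add: P_def Y_def)
    define e1 where "e1 = qq 1 1 y - (q + c 1 / (2 * Y))"
    define e2 where "e2 = qq (-1) (-1) y - (q - cm / (2 * Y))"
    have e: "\<bar>e1\<bar> \<le> K0 * P y" "\<bar>e2\<bar> \<le> K0 * P y"
      using N[OF y] P(4) K1 K2 mult_left_mono[OF P(4), of K1] mult_left_mono[OF P(4), of K2]
        mult_right_mono[OF _ P(1), of K1 K0] mult_right_mono[OF _ P(1), of K2 K0]
      by (auto simp: e1_def e2_def Y_def cm_def K0_def)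
    have diff: "qq 1 1 y - qq (-1) (-1) y = alpha * q / Y + e1 - e2"
      using q_bounds Y unfolding e1_def e2_def alpha_def cm_def by (simp add: field_simps)
    have dn: "qq (-1) (-1) y - q = - cm / (2 * Y) + e2" by (simp add: e2_def)
    have mm: "qq (-1) (-1) y \<ge> q / 2"
    proof -
      have "\<bar>cm / (2 * Y)\<bar> \<le> q / 8" using N[OF y] Y by (simp add: Y_def abs_divide)
      then show ?thesis using dn e(2) N[OF y] by (simp only: abs_le_iff) linarith
    qed
    note approx = persistence_ratio_approx[OF Y(1) q_bounds(1) P(1-3) e K0 diff dn mm]
    have "\<bar>qq 1 1 y / qq (-1) (-1) y - 1\<bar> \<le> 1 / 2"
      using approx(2) N[OF y] by (simp add: Y_def)
    then have "\<bar>ln (1 + (qq 1 1 y / qq (-1) (-1) y - 1)) - alpha * (ln Y - ln (Y - 1))\<bar>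
        \<le> (2 * B + A + 2 * \<bar>alpha\<bar>) * P y"
      using approx(1) square_le_from_abs_bound[OF approx(2) P(1-3)]
      by (intro ln_one_plus_vs_ln_diff) (auto simp: Y A_def B_def P)
    then show ?thesis by (simp add: Y_def)
  qed
  moreover have "2 * B + A + 2 * \<bar>alpha\<bar> \<ge> 0"
    unfolding A_def B_def using K0 q_bounds by (intro add_nonneg_nonneg mult_nonneg_nonneg) auto
  ultimately show ?thesis
    by (intro exI[of _ "2 * B + A + 2 * \<bar>alpha\<bar>"] exI[of _ "max N 2"]) (auto simp: P_def)
qed

lemma ln_ratio_prod_eq: "ln (ratio_prod x) = (\<Sum>y\<in>{1..x}. ln (qq 1 1 y / qq (-1) (-1) y))"
proof (induction x)
  case (Suc x)
  have "qq 1 1 (Suc x) / qq (-1) (-1) (Suc x) > 0"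
    using qq_up_up_pos qq_dn_dn_pos by simp
  then have "ln (ratio_prod (Suc x)) = ln (ratio_prod x) + ln (qq 1 1 (Suc x) / qq (-1) (-1) (Suc x))"
    using ratio_prod_pos[of x] by (simp only: ratio_prod.simps(2) ln_mult_pos)
  then show ?case using Suc by simp
qed simp

lemma ln_real_eq_telescope: "ln (real x) = (\<Sum>y\<in>{1..x}. ln (real y) - ln (real y - 1))"
  by (induction x) simp_all

lemma ln_ratio_prod_sub_ln_bounded: "\<exists>B. \<forall>x. \<bar>ln (ratio_prod x) - alpha * ln (real x)\<bar> \<le> B"
proof -
  define d where "d y = ln (qq 1 1 y / qq (-1) (-1) y) - alpha * (ln (real y) - ln (real y - 1))"
    for y :: nat
  from log_ratio_bound obtain K Y0 where K: "K \<ge> 0"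
    and bound: "\<forall>y\<ge>Y0. \<bar>ln (qq 1 1 y / qq (-1) (-1) y) - alpha * (ln (real y) - ln (real y - 1))\<bar>
      \<le> K * real y powr (-1 - \<delta>')"
    by (elim exE conjE)
  have d_bound: "\<bar>d y\<bar> \<le> K * real y powr (-1 - \<delta>')" if "y \<ge> Y0" for y
    using bound that by (simp add: d_def)
  define p where "p y = real y powr (-1 - \<delta>')" for y :: nat
  have "summable p" unfolding p_def using \<delta>'_bounds by (subst summable_real_powr_iff) auto
  have "\<bar>ln (ratio_prod x) - alpha * ln (real x)\<bar> \<le> (\<Sum>y<Y0. \<bar>d y\<bar>) + K * suminf p" for x
  proof -
    have "ln (ratio_prod x) - alpha * ln (real x) = (\<Sum>y\<in>{1..x}. d y)"
      using ln_ratio_prod_eq[of x] ln_real_eq_telescope[of x]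
      by (simp add: d_def sum_subtractf sum_distrib_left right_diff_distrib)
    then have "\<bar>ln (ratio_prod x) - alpha * ln (real x)\<bar> \<le> (\<Sum>y\<in>{1..x}. \<bar>d y\<bar>)"
      by (simp add: sum_abs)
    also have "\<dots> \<le> (\<Sum>y\<in>{1..x}. (if y < Y0 then \<bar>d y\<bar> else 0) + K * p y)"
      using d_bound K by (intro sum_mono) (auto simp: p_def)
    also have "\<dots> = (\<Sum>y\<in>{1..x} \<inter> {..<Y0}. \<bar>d y\<bar>) + K * (\<Sum>y\<in>{1..x}. p y)"
      by (simp add: sum.distrib sum_distrib_left sum.inter_restrict)
    also have "(\<Sum>y\<in>{1..x} \<inter> {..<Y0}. \<bar>d y\<bar>) \<le> (\<Sum>y<Y0. \<bar>d y\<bar>)"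
      by (intro sum_mono2) auto
    also have "(\<Sum>y\<in>{1..x}. p y) \<le> suminf p"
      using \<open>summable p\<close> by (intro sum_le_suminf) (auto simp: p_def[abs_def])
    finally show ?thesis using K by (simp add: mult_left_mono)
  qed
  then show ?thesis by blast
qed

lemma ratio_prod_powr_bounds:
  obtains C1 C2 where "C1 > 0" "C2 > 0"
    "\<And>x. x \<ge> 1 \<Longrightarrow> C1 * real x powr alpha \<le> ratio_prod x \<and> ratio_prod x \<le> C2 * real x powr alpha"
proof -
  obtain B where B: "\<And>x. \<bar>ln (ratio_prod x) - alpha * ln (real x)\<bar> \<le> B"
    using ln_ratio_prod_sub_ln_bounded by blast
  have "exp (-B) * real x powr alpha \<le> ratio_prod x \<and> ratio_prod x \<le> exp B * real x powr alpha"
    if "x \<ge> 1" for x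
  proof -
    have "ratio_prod x = exp (ln (ratio_prod x) - alpha * ln (real x)) * real x powr alpha"
      using that ratio_prod_pos[of x] by (simp add: powr_def exp_diff)
    moreover have "exp (-B) \<le> exp (ln (ratio_prod x) - alpha * ln (real x))"
      "exp (ln (ratio_prod x) - alpha * ln (real x)) \<le> exp B"
      using B[of x] by (auto simp: abs_le_iff)
    ultimately show ?thesis by (metis mult_right_mono powr_ge_zero)
  qed
  then show ?thesis using that[of "exp (-B)" "exp B"] by auto
qed

lemma scale_dn_unbounded:
  assumes "alpha \<le> 1"
  shows "\<not> bdd_above (range scale_dn)"
proof
  assume "bdd_above (range scale_dn)"
  then obtain S where S: "\<And>x. scale_dn x \<le> S" by (auto simp: bdd_above_def)
  have "summable scale_incr"
  proof (rule summableI_nonneg_bounded)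
    show "(\<Sum>y<n. scale_incr y) \<le> S" for n
      using S[of "n - 1"] scale_dn_eq_partial_sum[of "n - 1"] scale_dn_nonneg[of 0] S[of 0]
      by (cases n) auto
  qed (rule scale_incr_nonneg)
  obtain C1 C2 where C2: "C2 > 0"
    and upper: "\<And>x. x \<ge> 1 \<Longrightarrow> ratio_prod x \<le> C2 * real x powr alpha"
    using ratio_prod_powr_bounds by metis
  obtain N where N: "\<And>y. y \<ge> N \<Longrightarrow> q / 2 \<le> qq (-1) (-1) y \<and> qq (-1) (-1) y \<le> (1 + q) / 2"
    using eventually_qq_dn_dn_bounds unfolding eventually_sequentially by blast
  define \<kappa> where "\<kappa> = (1 - q) / (2 * C2)"
  have "\<kappa> > 0" using C2 q_bounds by (simp add: \<kappa>_def)
  have "summable (\<lambda>y. inverse (real y) :: real)"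
  proof (rule summable_comparison_test')
    show "summable (\<lambda>y. scale_incr y / \<kappa>)" using \<open>summable scale_incr\<close> by (rule summable_divide)
    fix y assume y: "y \<ge> max N 1"
    have qq: "q / 2 \<le> qq (-1) (-1) y" "qq (-1) 1 y \<ge> (1 - q) / 2"
      using N[of y] y qq_dn_up_eq[of y] by auto
    have "ratio_prod y \<le> C2 * real y"
      using upper[of y] y powr_mono[of alpha 1 "real y"] assms C2 by (auto intro: order_trans)
    then have "(1 - q) / 2 / (C2 * real y) \<le> qq (-1) 1 y / ratio_prod y"
      using qq q_bounds ratio_prod_pos[of y] y by (intro frac_le) auto
    also have "\<dots> \<le> scale_incr y"
      using qq q_bounds qq_dn_dn_le_1[of y] ratio_prod_pos[of y]
      by (simp add: scale_incr_def divide_right_mono le_divide_eq mult_left_le)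
    finally show "norm (inverse (real y)) \<le> scale_incr y / \<kappa>"
      using \<open>\<kappa> > 0\<close> y C2 by (simp add: \<kappa>_def field_simps)
  qed
  then show False using not_summable_harmonic[where 'a = real] by simp
qed

lemma scale_up_bounded:
  assumes "alpha > 1"
  shows "bdd_above (range scale_up)"
proof -
  obtain C1 C2 where C1: "C1 > 0"
    and lower: "\<And>x. x \<ge> 1 \<Longrightarrow> C1 * real x powr alpha \<le> ratio_prod x"
    using ratio_prod_powr_bounds by metis
  have inv: "summable (\<lambda>y. 1 / ratio_prod y)"
  proof (rule summable_comparison_test')
    show "summable (\<lambda>y. (1 / C1) * real y powr (- alpha))"
      using assms by (intro summable_mult) (subst summable_real_powr_iff; simp)
    fix y :: nat assume y: "y \<ge> 1"
    then have "1 / ratio_prod y \<le> 1 / (C1 * real y powr alpha)"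
      using lower[OF y] C1 ratio_prod_pos[of y] by (intro divide_left_mono) auto
    then show "norm (1 / ratio_prod y) \<le> (1 / C1) * real y powr (- alpha)"
      using ratio_prod_pos[of y] y by (simp add: powr_minus divide_inverse)
  qed
  obtain N where N: "\<And>y. y \<ge> N \<Longrightarrow> q / 2 \<le> qq (-1) (-1) y"
    using eventually_qq_dn_dn_bounds unfolding eventually_sequentially by blast
  have incr: "summable scale_incr"
  proof (rule summable_comparison_test')
    show "summable (\<lambda>y. (2 / q) * (1 / ratio_prod y))" using inv by (rule summable_mult)
    fix y assume "y \<ge> N"
    then have "qq (-1) 1 y / qq (-1) (-1) y \<le> 1 / (q / 2)"
      using N qq_dn_up_eq[of y] qq_dn_dn_pos q_bounds nonneg[of "-1" "-1" y]
      by (intro frac_le) (auto simp: dirs_def)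
    then have "scale_incr y \<le> (2 / q) / ratio_prod y"
      unfolding scale_incr_def using ratio_prod_pos[of y] by (intro divide_right_mono) auto
    then show "norm (scale_incr y) \<le> (2 / q) * (1 / ratio_prod y)"
      using scale_incr_nonneg[of y] by simp
  qed
  have "scale_up x \<le> suminf scale_incr + (\<Sum>y. 1 / ratio_prod y)" for x
  proof -
    have "scale_dn x \<le> suminf scale_incr"
      unfolding scale_dn_eq_partial_sum using incr scale_incr_nonneg by (intro sum_le_suminf) auto
    moreover have "1 / ratio_prod x \<le> (\<Sum>y. 1 / ratio_prod y)"
      using sum_le_suminf[OF inv, of "{x}"] ratio_prod_pos by (simp add: less_imp_le)
    ultimately show ?thesis by (simp add: scale_up_def)
  qed
  then show ?thesis by (intro bdd_aboveI2)
qed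

lemma summable_ratio_prod:
  assumes "alpha < -1"
  shows "summable ratio_prod"
proof -
  obtain C1 C2 where upper: "\<And>x. x \<ge> 1 \<Longrightarrow> ratio_prod x \<le> C2 * real x powr alpha"
    using ratio_prod_powr_bounds by metis
  show ?thesis
  proof (rule summable_comparison_test')
    show "summable (\<lambda>y. C2 * real y powr alpha)"
      using assms by (intro summable_mult) (subst summable_real_powr_iff; simp)
    show "norm (ratio_prod y) \<le> C2 * real y powr alpha" if "y \<ge> 1" for y
      using upper[OF that] ratio_prod_pos[of y] by simp
  qed
qed

lemma not_summable_ratio_prod:
  assumes "alpha \<ge> -1"
  shows "\<not> summable ratio_prod"
proof
  assume "summable ratio_prod"
  obtain C1 C2 where C1: "C1 > 0"
    and lower: "\<And>x. x \<ge> 1 \<Longrightarrow> C1 * real x powr alpha \<le> ratio_prod x"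
    using ratio_prod_powr_bounds by metis
  have "summable (\<lambda>y. inverse (real y) :: real)"
  proof (rule summable_comparison_test')
    show "summable (\<lambda>y. ratio_prod y / C1)" using \<open>summable ratio_prod\<close> by (rule summable_divide)
    fix y :: nat assume y: "y \<ge> 1"
    have "C1 * inverse (real y) \<le> C1 * real y powr alpha"
      using y assms powr_mono[of "-1" alpha "real y"] C1 by (simp add: powr_minus)
    then have "inverse (real y) * C1 \<le> ratio_prod y"
      using lower[OF y] by (simp add: mult.commute)
    then show "norm (inverse (real y) :: real) \<le> ratio_prod y / C1"
      using C1 by (simp add: pos_le_divide_eq)
  qed
  then show False using not_summable_harmonic[where 'a = real] by simp
qed

end

theorem theorem1p1:
  fixes q \<delta> :: real and c :: "int \<Rightarrow> real" and qq :: "int \<Rightarrow> int \<Rightarrow> nat \<Rightarrow> real"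
  assumes q01: "0 < q" "q < 1"
    and delta: "\<delta> > 0"
    and nonneg: "\<And>i j x. i \<in> dirs \<Longrightarrow> j \<in> dirs \<Longrightarrow> qq i j x \<ge> 0"
    and stoch: "\<And>i x. i \<in> dirs \<Longrightarrow> qq i 1 x + qq i (-1) x = 1"
    and boundary: "\<And>i. i \<in> dirs \<Longrightarrow> qq i (-1) 0 = 0"
    and irred: "irreducible_on (crw_kernel qq) crw_states"
    and asym_same: "\<And>i. i \<in> dirs \<Longrightarrow>
       (\<lambda>x::nat. qq i i x - (q + of_int i * c i / (2 * real x))) \<in> O(\<lambda>x. real x powr (-1 - \<delta>))"
    and asym_diff: "\<And>i j. i \<in> dirs \<Longrightarrow> j \<in> dirs \<Longrightarrow> j \<noteq> i \<Longrightarrow>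
       (\<lambda>x::nat. qq i j x - (1 - q - of_int i * c i / (2 * real x))) \<in> O(\<lambda>x. real x powr (-1 - \<delta>))"
  shows "((c 1 + c (-1)) / 2 < - q \<longrightarrow> (\<forall>s\<in>crw_states. pos_recurrent_state (crw_kernel qq) s))
    \<and> ((c 1 + c (-1)) / 2 > q \<longrightarrow> (\<forall>s\<in>crw_states. transient_state (crw_kernel qq) s))
    \<and> (\<bar>(c 1 + c (-1)) / 2\<bar> \<le> q \<longrightarrow> (\<forall>s\<in>crw_states. null_recurrent_state (crw_kernel qq) s))"
proof -
  \<comment> \<open>\<open>asym_diff\<close> follows from \<open>asym_same\<close> and \<open>stoch\<close>.\<close>
  interpret crw qq q \<delta> c
    using q01 delta nonneg stoch boundary irred asym_same by unfold_locales
  define cbar where "cbar = (c 1 + c (-1)) / 2"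
  have alpha: "alpha = cbar / q" by (simp add: alpha_def cbar_def)
  have regimes: "cbar < - q \<longleftrightarrow> alpha < -1" "cbar > q \<longleftrightarrow> alpha > 1"
    "\<bar>cbar\<bar> \<le> q \<longleftrightarrow> -1 \<le> alpha \<and> alpha \<le> 1"
    using q01 by (auto simp: alpha divide_less_eq less_divide_eq abs_le_iff divide_le_eq le_divide_eq)
  have recurrent: "recurrent_state P s" if "alpha \<le> 1" "s \<in> crw_states" for s
    using recurrent_if_scale_unbounded[OF scale_dn_unbounded] that
    by (simp add: recurrent_state_def return_prob_eq_hit_prob)
  have "alpha < -1 \<Longrightarrow> s \<in> crw_states \<Longrightarrow> pos_recurrent_state P s" for s
    using recurrent pos_recurrent_if_summable_ratio_prod[OF summable_ratio_prod]
    by (simp add: pos_recurrent_state_def)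
  moreover have "alpha > 1 \<Longrightarrow> s \<in> crw_states \<Longrightarrow> transient_state P s" for s
    using transient_if_scale_bounded[OF scale_up_bounded]
    by (simp add: transient_state_def recurrent_state_def return_prob_eq_hit_prob)
  moreover have "-1 \<le> alpha \<Longrightarrow> alpha \<le> 1 \<Longrightarrow> s \<in> crw_states \<Longrightarrow> null_recurrent_state P s" for s
    using recurrent null_if_not_summable_ratio_prod[OF not_summable_ratio_prod]
    by (simp add: null_recurrent_state_def recurrent_state_def return_prob_eq_hit_prob)
  ultimately show ?thesis
    unfolding cbar_def[symmetric] regimes by blast
qed

end
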